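(* Let $\lambda\in\{1,-1\}$, $0<T<\infty$, and let $q(x,t)$ be a real, sufficiently smooth solution of the mKdV equation $q_t+q_{xxx}-6\lambda q^2q_x=0$ on $0<x<\infty$, $0<t<T$, decaying sufficiently fast as $x\to\infty$, with compatible initial and boundary data. Let $\Phi_1,\Phi_2$, $a,b$, $F$, $c$ be as in the context, so that the global relation $c(t,k)=\Phi_1(t,k)+\frac{b(k)}{a(k)}\overline{\Phi_2(t,\bar k)}e^{-8ik^3t}$ holds for $\operatorname{Im}k\ge0$. Then $$c(t,k)=\frac{\Phi_1^{(1)}(t)}{k}+\frac{\Phi_1^{(2)}(t)}{k^2}+\frac{\Phi_1^{(3)}(t)}{k^3}+O\Big(\frac1{k^4}\Big),\qquad k\to\infty,\ k\in D_1,$$ where $\Phi_1^{(j)}$ are the coefficients of the expansions $\Phi_1(t,k)=\sum_{j=1}^3\Phi_1^{(j)}(t)k^{-j}+O(k^{-4})+O(e^{-8ik^3t}k^{-2})$, $\Phi_2(t,k)=1+\Phi_2^{(1)}(t)k^{-1}+\Phi_2^{(2)}(t)k^{-2}+O(k^{-3})$ valid as $k\to\infty$, $k\in D_2\cup D_4$; explicitly, with $I_\Delta(t)=\int_0^t\big(g_1^2-2g_0g_2+3\lambda g_0^4\big)(\tau)d\tau$, $\Phi_2^{(1)}=\frac{\lambda}{2i}I_\Delta$, $\Phi_2^{(2)}=\frac18\big[\lambda(g_0(t)^2-g_0(0)^2)-I_\Delta(t)^2\big]$, $\Phi_1^{(1)}=\frac{g_0}{2i}$, $\Phi_1^{(2)}=\frac{g_1}{4}-\frac{\lambda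 g_0}{4}I_\Delta$, $\Phi_1^{(3)}=\frac1{2i}\big(g_0\Phi_2^{(2)}+\frac i2g_1\Phi_2^{(1)}+\frac{\lambda g_0^3}{4}-\frac14g_2\big)$.
   Context: $g_0(t)=q(0,t)$, $g_1(t)=q_x(0,t)$, $g_2(t)=q_{xx}(0,t)$. $\sigma_3=\mathrm{diag}(1,-1)$, $Q(x,t)=\begin{pmatrix}0&q\\ \lambda q&0\end{pmatrix}$, $e^{s\hat\sigma_3}M=e^{s\sigma_3}Me^{-s\sigma_3}$. Domains: $D_1=\{\operatorname{Im}k>0,\operatorname{Im}k^3>0\}$ (i.e. $\arg k\in(0,\pi/3)\cup(2\pi/3,\pi)$), $D_2=\{\arg k\in(\pi/3,2\pi/3)\}$, $D_3=\{\arg k\in(-2\pi/3,-\pi/3)\}$, $D_4=\{\operatorname{Im}k<0,\operatorname{Im}k^3<0\}$. $\Phi_1,\Phi_2$ ($0<t<T$, $k\in\mathbb C$) are the unique solution of $\Phi_1(t,k)=\int_0^te^{8ik^3(t'-t)}[-2ik\lambda g_0^2\Phi_1+(2\lambda g_0^3+4k^2g_0+2ikg_1-g_2)\Phi_2](t',k)dt'$, $\Phi_2(t,k)=1+\lambda\int_0^t[(2\lambda g_0^3+4k^2g_0-2ikg_1-g_2)\Phi_1+2ikg_0^2\Phi_2](t',k)dt'$. For each $t$, $\mu_3(x,t,k)$ solves $\mu_3=I-\int_x^\infty e^{-ik(x-\xi)\hat\sigma_3}(Q\mu_3)(\xi,t,k)d\xi$ (second column analytic in $\operatorname{Im}k>0$);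 $\Psi(x,k)=\mu_3(x,0,k)$, $a(k)=\Psi_{22}(0,k)$, $b(k)=\Psi_{12}(0,k)$ for $\operatorname{Im}k\ge0$; $F(t,k)=\mu_3(0,t,k)$, whose second column is analytic and bounded in $\operatorname{Im}k>0$ with $F=I+O(1/k)$; $c(t,k)=F_{12}(t,k)/a(k)$. *)

theory Defs
  imports "HOL-Analysis.Analysis" "HOL-Library.Landau_Symbols"
begin

definition pdx :: "(real \<Rightarrow> real \<Rightarrow> real) \<Rightarrow> real \<Rightarrow> real \<Rightarrow> real" where
  "pdx f x t = deriv (\<lambda>y. f y t) x"

definition pdt :: "(real \<Rightarrow> real \<Rightarrow> real) \<Rightarrow> real \<Rightarrow> real \<Rightarrow> real" where
  "pdt f x t = deriv (\<lambda>s. f x s) t"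

fun pder :: "bool list \<Rightarrow> (real \<Rightarrow> real \<Rightarrow> real) \<Rightarrow> real \<Rightarrow> real \<Rightarrow> real" where
  "pder [] f = f"
| "pder (d # ds) f = (if d then pdx (pder ds f) else pdt (pder ds f))"

definition smooth2 :: "(real \<Rightarrow> real \<Rightarrow> real) \<Rightarrow> bool" where
  "smooth2 f \<longleftrightarrow> (\<forall>ds. continuous_on UNIV (\<lambda>z. pder ds f (fst z) (snd z))
      \<and> (\<forall>x t. (\<lambda>y. pder ds f y t) differentiable (at x))
      \<and> (\<forall>x t. (\<lambda>s. pder ds f x s) differentiable (at t)))"

definition rapid_decay :: "(real \<Rightarrow> real \<Rightarrow> real) \<Rightarrow> real \<Rightarrow> bool" where
  "rapid_decay f T \<longleftrightarrow> (\<forall>ds (n::nat). \<exists>C. \<forall>x\<ge>0. \<forall>t\<in>{0..T}.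
      (1 + x) ^ n * \<bar>pder ds f x t\<bar> \<le> C)"

definition g0 :: "(real \<Rightarrow> real \<Rightarrow> real) \<Rightarrow> real \<Rightarrow> real" where
  "g0 q t = q 0 t"
definition g1 :: "(real \<Rightarrow> real \<Rightarrow> real) \<Rightarrow> real \<Rightarrow> real" where
  "g1 q t = pdx q 0 t"
definition g2 :: "(real \<Rightarrow> real \<Rightarrow> real) \<Rightarrow> real \<Rightarrow> real" where
  "g2 q t = pdx (pdx q) 0 t"

definition D1 :: "complex set" where
  "D1 = {k. Im k > 0 \<and> Im (k ^ 3) > 0}"

definition I_Delta :: "real \<Rightarrow> (real \<Rightarrow> real \<Rightarrow> real) \<Rightarrow> real \<Rightarrow> real" where
  "I_Delta lam q t = integral {0..t}
     (\<lambda>\<tau>. (g1 q \<tau>)\<^sup>2 - 2 * g0 q \<tau> * g2 q \<tau> + 3 * lam * (g0 q \<tau>) ^ 4)"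

definition Phi2_1 :: "real \<Rightarrow> (real \<Rightarrow> real \<Rightarrow> real) \<Rightarrow> real \<Rightarrow> complex" where
  "Phi2_1 lam q t = complex_of_real lam / (2 * \<i>) * complex_of_real (I_Delta lam q t)"

definition Phi2_2 :: "real \<Rightarrow> (real \<Rightarrow> real \<Rightarrow> real) \<Rightarrow> real \<Rightarrow> complex" where
  "Phi2_2 lam q t = complex_of_real
     ((lam * ((g0 q t)\<^sup>2 - (g0 q 0)\<^sup>2) - (I_Delta lam q t)\<^sup>2) / 8)"

definition Phi1_1 :: "(real \<Rightarrow> real \<Rightarrow> real) \<Rightarrow> real \<Rightarrow> complex" where
  "Phi1_1 q t = complex_of_real (g0 q t) / (2 * \<i>)"

definition Phi1_2 :: "real \<Rightarrow> (real \<Rightarrow> real \<Rightarrow> real) \<Rightarrow> real \<Rightarrow> complex" where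
  "Phi1_2 lam q t = complex_of_real (g1 q t / 4 - lam * g0 q t / 4 * I_Delta lam q t)"

definition Phi1_3 :: "real \<Rightarrow> (real \<Rightarrow> real \<Rightarrow> real) \<Rightarrow> real \<Rightarrow> complex" where
  "Phi1_3 lam q t = 1 / (2 * \<i>) *
     (complex_of_real (g0 q t) * Phi2_2 lam q t
      + \<i> / 2 * complex_of_real (g1 q t) * Phi2_1 lam q t
      + complex_of_real (lam * (g0 q t) ^ 3 / 4)
      - complex_of_real (g2 q t) / 4)"

end

theory Submission
  imports Defs
begin

text \<open>
  Both \<open>F\<^sub>1\<^sub>2(t, k) = \<mu>\<^sub>3\<^sub>1\<^sub>2(0, t, k)\<close> and \<open>a(k) = \<mu>\<^sub>3\<^sub>2\<^sub>2(0, 0, k)\<close> are values at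
  \<open>x = 0\<close> of the bounded solution of the Volterra system of the \<open>x\<close>-problem with potential
  \<open>q(\<cdot>, s)\<close>. Expanding this solution formally in powers of \<open>w = 1 / (2 i k)\<close> and truncating
  gives an approximate solution with residual \<open>O(w\<^sup>4)\<close>, uniformly for \<open>Im k \<ge> 0\<close> since
  \<open>|exp (2 i k (\<xi> - x))| \<le> 1\<close> there; a Gronwall estimate for the Volterra system turns this into
  an \<open>O(w\<^sup>4)\<close> error at \<open>x = 0\<close>. The coefficients involve \<open>q, q\<^sub>x, q\<^sub>x\<^sub>x\<close> at \<open>x = 0\<close>
  and the mass \<open>\<integral>\<^sub>0\<^sup>\<infinity> q\<^sup>2 dx\<close>, and the conservation law
  \<open>(q\<^sup>2)\<^sub>t = - (2 q q\<^sub>x\<^sub>x - q\<^sub>x\<^sup>2 - 3 \<lambda> q\<^sup>4)\<^sub>x\<close> of the mKdV equation expresses the mass at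
  time \<open>t\<close> through the mass at time \<open>0\<close> and the boundary integral \<open>I\<^sub>\<Delta>(t)\<close>. Dividing the two
  expansions yields the coefficients \<open>\<Phi>\<^sub>1\<^sup>(\<^sup>j\<^sup>)\<close>.

  The argument does not need the time-dependent functions \<open>\<Phi>\<^sub>1, \<Phi>\<^sub>2\<close> or the global relation.
\<close>

section \<open>Integrals over half-lines\<close>

lemma has_integral_inverse_square:
  fixes a C :: real
  assumes "a \<ge> 0" and "C \<ge> 0"
  shows "((\<lambda>x. C / (1 + x)^2) has_integral (C / (1 + a))) {a..}"
proof (rule has_integral_to_inf)
  show "(\<lambda>x. C / (1 + x)^2) integrable_on {a..y}" for y
    using assms by (intro integrable_continuous_interval continuous_intros) auto
  have "((\<lambda>x. C / (1 + x)^2) has_integral (- C / (1 + y) - (- C / (1 + a)))) {a..y}" if "y \<ge> a" for y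
    using that assms
    by (intro fundamental_theorem_of_calculus)
       (auto intro!: derivative_eq_intros simp: power2_eq_square field_simps
             simp flip: has_real_derivative_iff_has_vector_derivative)
  then have "\<forall>\<^sub>F y in at_top. integral {a..y} (\<lambda>x. C / (1 + x)^2) = C / (1 + a) - C / (1 + y)"
    by (intro eventually_at_top_linorderI[of a]) (simp add: integral_unique)
  moreover have "((\<lambda>y::real. C / (1 + a) - C / (1 + y)) \<longlongrightarrow> C / (1 + a)) at_top"
    by real_asymp
  ultimately show "((\<lambda>y. integral {a..y} (\<lambda>x. C / (1 + x)^2)) \<longlongrightarrow> C / (1 + a)) at_top"
    by (simp add: filterlim_cong)
qed (use assms in auto)

lemma inverse_square_bound_nonneg:
  fixes g :: "real \<Rightarrow> 'a::real_normed_vector"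
  assumes "\<And>x. x \<ge> a \<Longrightarrow> norm (g x) \<le> C / (1 + x)^2" and "a \<ge> 0"
  shows "C \<ge> 0"
  using order_trans[OF norm_ge_zero assms(1)[OF order_refl]] assms(2)
  by (simp add: zero_le_divide_iff)

lemma integrable_on_halfline_by_inverse_square:
  fixes g :: "real \<Rightarrow> 'a::euclidean_space"
  assumes "a \<ge> 0" and "continuous_on {a..} g"
    and "\<And>x. x \<ge> a \<Longrightarrow> norm (g x) \<le> C / (1 + x)^2"
  shows "g integrable_on {a..}"
proof (rule measurable_bounded_by_integrable_imp_integrable)
  show "g \<in> borel_measurable (lebesgue_on {a..})"
    using assms(2) by (rule continuous_imp_measurable_on_sets_lebesgue) auto
  show "(\<lambda>x. C / (1 + x)^2) integrable_on {a..}"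
    using has_integral_inverse_square[OF assms(1) inverse_square_bound_nonneg[OF assms(3,1)]]
    by blast
qed (use assms(3) in auto)

lemma norm_integral_halfline_le:
  fixes g :: "real \<Rightarrow> 'a::euclidean_space"
  assumes "a \<ge> 0" and "continuous_on {a..} g"
    and "\<And>x. x \<ge> a \<Longrightarrow> norm (g x) \<le> C / (1 + x)^2"
  shows "norm (integral {a..} g) \<le> C / (1 + a)"
proof -
  note int_C = has_integral_inverse_square[OF assms(1) inverse_square_bound_nonneg[OF assms(3,1)]]
  have "norm (integral {a..} g) \<le> integral {a..} (\<lambda>x. C / (1 + x)^2)"
    using integrable_on_halfline_by_inverse_square[OF assms] int_C assms(3)
    by (intro integral_norm_bound_integral) auto
  also have "\<dots> = C / (1 + a)"
    using int_C by (rule integral_unique)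
  finally show ?thesis .
qed

lemma norm_integral_halfline_bounded:
  fixes g :: "real \<Rightarrow> 'a::euclidean_space"
  assumes "a \<ge> 0" and "continuous_on {a..} g"
    and "\<And>x. x \<ge> a \<Longrightarrow> norm (g x) \<le> C / (1 + x)^2"
  shows "norm (integral {a..} g) \<le> C"
proof -
  have "C \<ge> 0" using inverse_square_bound_nonneg[OF assms(3,1)] .
  then have "C / (1 + a) \<le> C" using assms(1) divide_left_mono[of 1 "1 + a" C] by simp
  with norm_integral_halfline_le[OF assms] show ?thesis by linarith
qed

lemma integral_halfline_split:
  fixes g :: "real \<Rightarrow> 'a::euclidean_space"
  assumes "a \<ge> 0" and cont: "continuous_on {a..} g"
    and "\<And>x. x \<ge> a \<Longrightarrow> norm (g x) \<le> C / (1 + x)^2" and y: "a \<le> y"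
  shows "integral {a..} g = integral {a..y} g + integral {y..} g"
proof -
  have "(g has_integral integral {a..y} g) {a..y}"
    by (intro integrable_integral integrable_continuous_interval continuous_on_subset[OF cont]) auto
  moreover have "(g has_integral integral {y..} g) {y..}"
    using assms by (intro integrable_integral integrable_on_halfline_by_inverse_square[where C=C]
        continuous_on_subset[OF cont]) auto
  ultimately have "(g has_integral (integral {a..y} g + integral {y..} g)) ({a..y} \<union> {y..})"
    by (rule has_integral_Un) (use y in auto)
  moreover have "{a..y} \<union> {y..} = {a..}" using y by auto
  ultimately show ?thesis by (simp add: integral_unique)
qed

lemma tail_integral_tendsto_0:
  fixes g :: "real \<Rightarrow> 'a::euclidean_space"
  assumes "a \<ge> 0" and cont: "continuous_on {a..} g"
    and bound: "\<And>x. x \<ge> a \<Longrightarrow> norm (g x) \<le> C / (1 + x)^2"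
  shows "((\<lambda>y. integral {y..} g) \<longlongrightarrow> 0) at_top"
proof (rule Lim_null_comparison)
  show "\<forall>\<^sub>F y in at_top. norm (integral {y..} g) \<le> C / (1 + y)"
    using assms by (intro eventually_at_top_linorderI[of a] norm_integral_halfline_le[where C=C]
        continuous_on_subset[OF cont]) auto
  show "((\<lambda>y. C / (1 + y)) \<longlongrightarrow> 0) at_top" by real_asymp
qed

lemma integral_tendsto_integral_halfline:
  fixes g :: "real \<Rightarrow> 'a::euclidean_space"
  assumes "a \<ge> 0" and "continuous_on {a..} g"
    and "\<And>x. x \<ge> a \<Longrightarrow> norm (g x) \<le> C / (1 + x)^2"
  shows "((\<lambda>y. integral {a..y} g) \<longlongrightarrow> integral {a..} g) at_top"
proof -
  have "((\<lambda>y. integral {a..} g - integral {y..} g) \<longlongrightarrow> integral {a..} g - 0) at_top"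
    by (intro tendsto_intros tail_integral_tendsto_0[OF assms])
  moreover have "\<forall>\<^sub>F y in at_top. integral {a..} g - integral {y..} g = integral {a..y} g"
    by (intro eventually_at_top_linorderI[of a]) (simp add: integral_halfline_split[OF assms])
  ultimately show ?thesis by (simp add: tendsto_cong)
qed

lemma tail_integral_has_vector_derivative:
  fixes g :: "real \<Rightarrow> 'a::euclidean_space"
  assumes "a \<ge> 0" and cont: "continuous_on {a..} g"
    and "\<And>x. x \<ge> a \<Longrightarrow> norm (g x) \<le> C / (1 + x)^2" and x: "x \<ge> a"
  shows "((\<lambda>y. integral {y..} g) has_vector_derivative (- g x)) (at x within {a..})"
proof -
  have "at x within {a..} = at x within {a..x+1}"
    by (rule at_within_nhd[where S="{x - 1 <..< x + 1}"]) auto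
  moreover have "((\<lambda>y. integral {a..y} g) has_vector_derivative g x) (at x within {a..x+1})"
    using x by (intro integral_has_vector_derivative continuous_on_subset[OF cont]) auto
  ultimately have "((\<lambda>y. integral {a..} g - integral {a..y} g) has_vector_derivative (- g x))
      (at x within {a..})"
    by (auto intro!: derivative_eq_intros)
  then show ?thesis
    by (rule has_vector_derivative_transform[rotated 2])
       (use x integral_halfline_split[OF assms(1-3)] in auto)
qed

lemma has_integral_halfline_FTC:
  fixes g G :: "real \<Rightarrow> 'a::euclidean_space"
  assumes a: "a \<ge> 0" and cont: "continuous_on {a..} g"
    and bound: "\<And>x. x \<ge> a \<Longrightarrow> norm (g x) \<le> C / (1 + x)^2"
    and deriv: "\<And>x. x \<ge> a \<Longrightarrow> (G has_vector_derivative g x) (at x within {a..})"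
    and lim: "(G \<longlongrightarrow> L) at_top"
  shows "(g has_integral (L - G a)) {a..}"
proof -
  have int: "g integrable_on {a..}"
    using a cont bound by (rule integrable_on_halfline_by_inverse_square)
  have "((\<lambda>y. integral {a..y} g) \<longlongrightarrow> integral {a..} g) at_top"
    using a cont bound by (rule integral_tendsto_integral_halfline)
  moreover have "\<forall>\<^sub>F y in at_top. integral {a..y} g = G y - G a"
    by (intro eventually_at_top_linorderI[of a] integral_unique fundamental_theorem_of_calculus)
       (auto intro: has_vector_derivative_within_subset[OF deriv])
  ultimately have "((\<lambda>y. G y - G a) \<longlongrightarrow> integral {a..} g) at_top"
    by (simp add: filterlim_cong)
  moreover have "((\<lambda>y. G y - G a) \<longlongrightarrow> L - G a) at_top"
    by (intro tendsto_intros lim)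
  ultimately have "integral {a..} g = L - G a"
    by (rule tendsto_unique[rotated]) simp
  with int show ?thesis by (metis has_integral_integral)
qed

definition quad_decay :: "(real \<Rightarrow> 'a::real_normed_vector) \<Rightarrow> bool" where
  "quad_decay h \<longleftrightarrow> (\<exists>K. \<forall>x\<ge>0. norm (h x) \<le> K / (1 + x)^2)"

definition halfline_bounded :: "(real \<Rightarrow> 'a::real_normed_vector) \<Rightarrow> bool" where
  "halfline_bounded h \<longleftrightarrow> (\<exists>K. \<forall>x\<ge>0. norm (h x) \<le> K)"

lemma quad_decayE:
  assumes "quad_decay h"
  obtains K where "K \<ge> 0" "\<And>x. x \<ge> 0 \<Longrightarrow> norm (h x) \<le> K / (1 + x)^2"
proof -
  obtain K where "\<And>x. x \<ge> 0 \<Longrightarrow> norm (h x) \<le> K / (1 + x)^2"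
    using assms unfolding quad_decay_def by blast
  with inverse_square_bound_nonneg[OF this] that show thesis by blast
qed

lemma halfline_boundedE:
  assumes "halfline_bounded h"
  obtains K where "K \<ge> 0" "\<And>x. x \<ge> 0 \<Longrightarrow> norm (h x) \<le> K"
  using assms unfolding halfline_bounded_def by (meson norm_ge_zero order.trans order_refl)

lemma quad_decay_imp_halfline_bounded:
  assumes "quad_decay h" shows "halfline_bounded h"
proof -
  obtain K where K: "K \<ge> 0" "\<And>x. x \<ge> 0 \<Longrightarrow> norm (h x) \<le> K / (1 + x)^2"
    using quad_decayE[OF assms] by blast
  have "K / (1 + x)^2 \<le> K" if "x \<ge> 0" for x
    using that K(1) divide_left_mono[of 1 "(1 + x)^2" K] by (simp add: one_le_power)
  then show ?thesis unfolding halfline_bounded_def using K(2) by (meson order.trans)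
qed

lemma halfline_bounded_const: "halfline_bounded (\<lambda>x. c)"
  unfolding halfline_bounded_def by blast

lemma quad_decay_add:
  assumes "quad_decay f" "quad_decay g" shows "quad_decay (\<lambda>x. f x + g x)"
proof -
  obtain K L where K: "\<And>x. x \<ge> 0 \<Longrightarrow> norm (f x) \<le> K / (1 + x)^2"
    and L: "\<And>x. x \<ge> 0 \<Longrightarrow> norm (g x) \<le> L / (1 + x)^2"
    using assms unfolding quad_decay_def by blast
  have "norm (f x + g x) \<le> (K + L) / (1 + x)^2" if "x \<ge> 0" for x
    using norm_triangle_ineq[of "f x" "g x"] K[OF that] L[OF that] by (simp add: add_divide_distrib)
  then show ?thesis unfolding quad_decay_def by blast
qed

lemma quad_decay_minus: "quad_decay f \<Longrightarrow> quad_decay (\<lambda>x. - f x)"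
  unfolding quad_decay_def by simp

lemma quad_decay_diff: "quad_decay f \<Longrightarrow> quad_decay g \<Longrightarrow> quad_decay (\<lambda>x. f x - g x)"
  using quad_decay_add[of f "\<lambda>x. - g x"] quad_decay_minus[of g] by simp

lemma halfline_bounded_add:
  assumes "halfline_bounded f" "halfline_bounded g" shows "halfline_bounded (\<lambda>x. f x + g x)"
proof -
  obtain K L where "\<And>x. x \<ge> 0 \<Longrightarrow> norm (f x) \<le> K" "\<And>x. x \<ge> 0 \<Longrightarrow> norm (g x) \<le> L"
    using assms unfolding halfline_bounded_def by blast
  then have "norm (f x + g x) \<le> K + L" if "x \<ge> 0" for x
    using that norm_triangle_ineq[of "f x" "g x"] by fastforce
  then show ?thesis unfolding halfline_bounded_def by blast
qed

lemma halfline_bounded_minus: "halfline_bounded f \<Longrightarrow> halfline_bounded (\<lambda>x. - f x)"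
  unfolding halfline_bounded_def by simp

lemma halfline_bounded_diff:
  "halfline_bounded f \<Longrightarrow> halfline_bounded g \<Longrightarrow> halfline_bounded (\<lambda>x. f x - g x)"
  using halfline_bounded_add[of f "\<lambda>x. - g x"] halfline_bounded_minus[of g] by simp

lemma quad_decay_mult_bounded:
  fixes f g :: "real \<Rightarrow> 'a::real_normed_algebra"
  assumes "quad_decay f" "halfline_bounded g" shows "quad_decay (\<lambda>x. f x * g x)"
proof -
  obtain K where K: "K \<ge> 0" "\<And>x. x \<ge> 0 \<Longrightarrow> norm (f x) \<le> K / (1 + x)^2"
    using quad_decayE[OF assms(1)] by blast
  obtain L where L: "\<And>x. x \<ge> 0 \<Longrightarrow> norm (g x) \<le> L"
    using halfline_boundedE[OF assms(2)] by blast
  have "norm (f x * g x) \<le> K / (1 + x)^2 * L" if "x \<ge> 0" for x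
    using norm_mult_ineq[of "f x" "g x"] mult_mono[OF K(2)[OF that] L[OF that]] K(1)
    by (smt (verit) norm_ge_zero zero_le_divide_iff zero_le_power2)
  then show ?thesis unfolding quad_decay_def by (metis times_divide_eq_left mult.commute)
qed

lemma bounded_mult_quad_decay:
  fixes f g :: "real \<Rightarrow> 'a::real_normed_algebra"
  assumes "halfline_bounded f" "quad_decay g" shows "quad_decay (\<lambda>x. f x * g x)"
proof -
  obtain L where L: "L \<ge> 0" "\<And>x. x \<ge> 0 \<Longrightarrow> norm (f x) \<le> L"
    using halfline_boundedE[OF assms(1)] by blast
  obtain K where K: "\<And>x. x \<ge> 0 \<Longrightarrow> norm (g x) \<le> K / (1 + x)^2"
    using assms(2) unfolding quad_decay_def by blast
  have "norm (f x * g x) \<le> L * (K / (1 + x)^2)" if "x \<ge> 0" for x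
    using norm_mult_ineq[of "f x" "g x"] mult_mono[OF L(2)[OF that] K[OF that]] L(1)
    by (smt (verit) norm_ge_zero)
  then show ?thesis unfolding quad_decay_def by (metis times_divide_eq_right)
qed

lemma halfline_bounded_mult:
  fixes f g :: "real \<Rightarrow> 'a::real_normed_algebra"
  assumes "halfline_bounded f" "halfline_bounded g" shows "halfline_bounded (\<lambda>x. f x * g x)"
proof -
  obtain K L where K: "K \<ge> 0" "\<And>x. x \<ge> 0 \<Longrightarrow> norm (f x) \<le> K"
    and L: "\<And>x. x \<ge> 0 \<Longrightarrow> norm (g x) \<le> L"
    using halfline_boundedE[OF assms(1)] halfline_boundedE[OF assms(2)] by metis
  have "norm (f x * g x) \<le> K * L" if "x \<ge> 0" for x
    using norm_mult_ineq[of "f x" "g x"] mult_mono[OF K(2)[OF that] L[OF that]] K(1)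
    by (smt (verit) norm_ge_zero)
  then show ?thesis unfolding halfline_bounded_def by blast
qed

lemma halfline_bounded_power:
  fixes f :: "real \<Rightarrow> 'a::real_normed_algebra_1"
  shows "halfline_bounded f \<Longrightarrow> halfline_bounded (\<lambda>x. f x ^ n)"
  by (induction n) (auto intro: halfline_bounded_mult halfline_bounded_const)

lemma quad_decay_power:
  fixes f :: "real \<Rightarrow> 'a::real_normed_algebra_1"
  assumes "quad_decay f" "n > 0" shows "quad_decay (\<lambda>x. f x ^ n)"
proof -
  obtain m where "n = Suc m" using assms(2) by (cases n) auto
  moreover have "quad_decay (\<lambda>x. f x * f x ^ m)"
    using assms(1) by (intro quad_decay_mult_bounded halfline_bounded_power
        quad_decay_imp_halfline_bounded)
  ultimately show ?thesis by simp
qed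

lemma quad_decay_power2: "quad_decay f \<Longrightarrow> quad_decay (\<lambda>x. f x ^ 2)"
  and quad_decay_power3: "quad_decay f \<Longrightarrow> quad_decay (\<lambda>x. f x ^ 3)"
  for f :: "real \<Rightarrow> 'a::real_normed_algebra_1"
  by (auto intro: quad_decay_power)

lemma quad_decay_divide:
  fixes f :: "real \<Rightarrow> 'a::real_normed_field"
  shows "quad_decay f \<Longrightarrow> quad_decay (\<lambda>x. f x / c)"
  using quad_decay_mult_bounded[of f "\<lambda>x. 1 / c", OF _ halfline_bounded_const] by simp

lemma halfline_bounded_divide:
  fixes f :: "real \<Rightarrow> 'a::real_normed_field"
  shows "halfline_bounded f \<Longrightarrow> halfline_bounded (\<lambda>x. f x / c)"
  using halfline_bounded_mult[of f "\<lambda>x. 1 / c", OF _ halfline_bounded_const] by simp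

lemma quad_decay_of_real: "quad_decay f \<Longrightarrow> quad_decay (\<lambda>x. of_real (f x) :: 'a::real_normed_algebra_1)"
  unfolding quad_decay_def by simp

lemma halfline_bounded_of_real:
  "halfline_bounded f \<Longrightarrow> halfline_bounded (\<lambda>x. of_real (f x) :: 'a::real_normed_algebra_1)"
  unfolding halfline_bounded_def by simp

lemma quad_decay_tendsto_0:
  assumes "quad_decay f" shows "(f \<longlongrightarrow> 0) at_top"
proof -
  obtain K where K: "\<And>x. x \<ge> 0 \<Longrightarrow> norm (f x) \<le> K / (1 + x)^2"
    using assms unfolding quad_decay_def by blast
  then have "\<forall>\<^sub>F x in at_top. norm (f x) \<le> K / (1 + x)^2"
    by (intro eventually_at_top_linorderI[of 0]) auto
  moreover have "((\<lambda>x. K / (1 + x)^2) \<longlongrightarrow> 0) at_top" by real_asymp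
  ultimately show ?thesis by (rule Lim_null_comparison)
qed

lemmas quad_decay_intros =
  quad_decay_add quad_decay_minus quad_decay_diff quad_decay_mult_bounded bounded_mult_quad_decay
  quad_decay_power2 quad_decay_power3 quad_decay_divide quad_decay_of_real quad_decay_imp_halfline_bounded
  halfline_bounded_const halfline_bounded_add halfline_bounded_minus halfline_bounded_diff
  halfline_bounded_mult halfline_bounded_power halfline_bounded_divide halfline_bounded_of_real

lemma quad_decay_integrable_on_halfline:
  fixes g :: "real \<Rightarrow> 'a::euclidean_space"
  assumes "continuous_on {0..} g" "quad_decay g" "x \<ge> 0"
  shows "g integrable_on {x..}"
proof -
  obtain K where "\<And>x. x \<ge> 0 \<Longrightarrow> norm (g x) \<le> K / (1 + x)^2"
    using quad_decayE[OF assms(2)] by blast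
  then show ?thesis
    using assms(1,3) by (intro integrable_on_halfline_by_inverse_square[where C=K]
        continuous_on_subset[OF assms(1)]) auto
qed

lemma quad_decay_tail_integral:
  fixes g :: "real \<Rightarrow> 'a::euclidean_space"
  assumes cont: "continuous_on {0..} g" and "quad_decay g"
  shows "\<And>x. x \<ge> 0 \<Longrightarrow>
           ((\<lambda>y. integral {y..} g) has_vector_derivative (- g x)) (at x within {0..})"
    and "halfline_bounded (\<lambda>y. integral {y..} g)"
    and "((\<lambda>y. integral {y..} g) \<longlongrightarrow> 0) at_top"
proof -
  obtain K where K: "K \<ge> 0" "\<And>x. x \<ge> 0 \<Longrightarrow> norm (g x) \<le> K / (1 + x)^2"
    using quad_decayE[OF assms(2)] by blast
  show "((\<lambda>y. integral {y..} g) has_vector_derivative (- g x)) (at x within {0..})" if "x \<ge> 0" for x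
    using tail_integral_has_vector_derivative[OF _ cont K(2) that] by simp
  show "((\<lambda>y. integral {y..} g) \<longlongrightarrow> 0) at_top"
    using tail_integral_tendsto_0[OF _ cont K(2)] by simp
  have "norm (integral {y..} g) \<le> K" if "y \<ge> 0" for y
    using that K(2) by (intro norm_integral_halfline_bounded continuous_on_subset[OF cont]) auto
  then show "halfline_bounded (\<lambda>y. integral {y..} g)"
    unfolding halfline_bounded_def by blast
qed

section \<open>The oscillatory factor and a Volterra estimate\<close>

lemma norm_exp_upper_halfplane:
  fixes k :: complex and y :: real
  assumes "Im k \<ge> 0" "y \<ge> 0"
  shows "norm (exp (2 * \<i> * k * of_real y)) \<le> 1"
  using assms by (simp add: norm_exp_eq_Re mult_nonneg_nonneg)

lemma oscillatory_factor_has_vector_derivative: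
  fixes k :: complex and x :: real
  shows "((\<lambda>\<xi>. exp (2 * \<i> * k * of_real (\<xi> - x))) has_vector_derivative
           (2 * \<i> * k * exp (2 * \<i> * k * of_real (\<xi> - x)))) (at \<xi> within S)"
proof -
  have "((\<lambda>z. exp (2 * \<i> * k * (z - of_real x))) has_field_derivative
           (exp (2 * \<i> * k * (of_real \<xi> - of_real x)) * (2 * \<i> * k))) (at (of_real \<xi>))"
    by (auto intro!: derivative_eq_intros)
  from has_vector_derivative_real_field[OF this, where s=S]
  show ?thesis by (simp add: mult.commute)
qed

lemma norm_oscillatory_mult_le:
  assumes "Im k \<ge> 0" "x \<le> \<xi>"
  shows "norm (exp (2 * \<i> * k * of_real (\<xi> - x)) * z) \<le> norm z"
  using norm_exp_upper_halfplane[OF assms(1), of "\<xi> - x"] assms(2)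
  by (simp add: norm_mult mult_left_le_one_le)

lemma oscillatory_integral_bound:
  fixes g :: "real \<Rightarrow> complex"
  assumes k: "Im k \<ge> 0" and x: "x \<ge> 0" and cont: "continuous_on {0..} g"
    and bound: "\<And>\<xi>. \<xi> \<ge> 0 \<Longrightarrow> norm (g \<xi>) \<le> K / (1 + \<xi>)^2"
  shows "(\<lambda>\<xi>. exp (2 * \<i> * k * of_real (\<xi> - x)) * g \<xi>) integrable_on {x..}"
    and "norm (integral {x..} (\<lambda>\<xi>. exp (2 * \<i> * k * of_real (\<xi> - x)) * g \<xi>)) \<le> K"
proof -
  have cont': "continuous_on {x..} (\<lambda>\<xi>. exp (2 * \<i> * k * of_real (\<xi> - x)) * g \<xi>)"
    using x by (intro continuous_intros continuous_on_subset[OF cont]) auto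
  have bound': "norm (exp (2 * \<i> * k * of_real (\<xi> - x)) * g \<xi>) \<le> K / (1 + \<xi>)^2" if "\<xi> \<ge> x" for \<xi>
    using order_trans[OF norm_oscillatory_mult_le[OF k that] bound] that x by simp
  show "(\<lambda>\<xi>. exp (2 * \<i> * k * of_real (\<xi> - x)) * g \<xi>) integrable_on {x..}"
    using x cont' bound' by (rule integrable_on_halfline_by_inverse_square)
  show "norm (integral {x..} (\<lambda>\<xi>. exp (2 * \<i> * k * of_real (\<xi> - x)) * g \<xi>)) \<le> K"
    using x cont' bound' by (rule norm_integral_halfline_bounded)
qed

lemma has_integral_oscillatory_primitive:
  fixes G G' r :: "real \<Rightarrow> complex"
  assumes k: "Im k \<ge> 0" and x: "x \<ge> 0" and cont: "continuous_on {0..} r"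
    and bound: "\<And>\<xi>. \<xi> \<ge> 0 \<Longrightarrow> norm (r \<xi>) \<le> K / (1 + \<xi>)^2"
    and deriv: "\<And>\<xi>. \<xi> \<ge> 0 \<Longrightarrow> (G has_vector_derivative G' \<xi>) (at \<xi> within {0..})"
    and ode: "\<And>\<xi>. \<xi> \<ge> 0 \<Longrightarrow> 2 * \<i> * k * G \<xi> + G' \<xi> = r \<xi>"
    and lim: "(G \<longlongrightarrow> 0) at_top"
  shows "((\<lambda>\<xi>. exp (2 * \<i> * k * of_real (\<xi> - x)) * r \<xi>) has_integral (- G x)) {x..}"
proof -
  define E where "E \<xi> = exp (2 * \<i> * k * of_real (\<xi> - x))" for \<xi>
  have sub: "{x..} \<subseteq> {0..}" using x by auto
  have "((\<lambda>\<xi>. E \<xi> * r \<xi>) has_integral (0 - E x * G x)) {x..}"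
  proof (rule has_integral_halfline_FTC[where C=K])
    show "continuous_on {x..} (\<lambda>\<xi>. E \<xi> * r \<xi>)"
      unfolding E_def by (intro continuous_intros continuous_on_subset[OF cont sub])
    show "norm (E \<xi> * r \<xi>) \<le> K / (1 + \<xi>)^2" if "\<xi> \<ge> x" for \<xi>
      using order_trans[OF norm_oscillatory_mult_le[OF k that] bound] that x unfolding E_def by simp
    show "((\<lambda>\<xi>. E \<xi> * G \<xi>) has_vector_derivative E \<xi> * r \<xi>) (at \<xi> within {x..})"
      if "\<xi> \<ge> x" for \<xi>
    proof -
      have "(G has_vector_derivative G' \<xi>) (at \<xi> within {x..})"
        using deriv[of \<xi>] that x by (auto intro: has_vector_derivative_within_subset[OF _ sub])
      then have "((\<lambda>\<xi>. E \<xi> * G \<xi>) has_vector_derivative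
          E \<xi> * G' \<xi> + 2 * \<i> * k * E \<xi> * G \<xi>) (at \<xi> within {x..})"
        unfolding E_def by (intro has_vector_derivative_mult oscillatory_factor_has_vector_derivative)
      moreover have "E \<xi> * G' \<xi> + 2 * \<i> * k * E \<xi> * G \<xi> = E \<xi> * (2 * \<i> * k * G \<xi> + G' \<xi>)"
        by (simp add: algebra_simps)
      ultimately show ?thesis using ode[of \<xi>] that x by simp
    qed
    have "\<forall>\<^sub>F \<xi> in at_top. norm (E \<xi> * G \<xi>) \<le> norm (G \<xi>)"
      unfolding E_def using norm_oscillatory_mult_le[OF k]
      by (intro eventually_at_top_linorderI[of x]) auto
    moreover have "((\<lambda>\<xi>. norm (G \<xi>)) \<longlongrightarrow> 0) at_top"
      using tendsto_norm[OF lim] by simp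
    ultimately show "((\<lambda>\<xi>. E \<xi> * G \<xi>) \<longlongrightarrow> 0) at_top"
      by (rule Lim_null_comparison)
  qed (rule x)
  then show ?thesis unfolding E_def by simp
qed

lemma has_integral_weighted_inverse_square:
  fixes C x :: real
  assumes C: "C \<ge> 0" and x: "x \<ge> 0"
  shows "((\<lambda>\<xi>. C / (1 + \<xi>)^2 * exp (2 * C / (1 + \<xi>))) has_integral
           ((exp (2 * C / (1 + x)) - 1) / 2)) {x..}"
proof -
  have exp_le: "exp (2 * C / (1 + \<xi>)) \<le> exp (2 * C)" if "\<xi> \<ge> 0" for \<xi>
    using that C divide_left_mono[of 1 "1 + \<xi>" "2 * C"] by simp
  have "((\<lambda>\<xi>. C / (1 + \<xi>)^2 * exp (2 * C / (1 + \<xi>))) has_integral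
      (- 1 / 2 - (- exp (2 * C / (1 + x)) / 2))) {x..}"
  proof (rule has_integral_halfline_FTC[where C="C * exp (2 * C)"])
    show "continuous_on {x..} (\<lambda>\<xi>. C / (1 + \<xi>)^2 * exp (2 * C / (1 + \<xi>)))"
      using x by (intro continuous_intros) auto
    show "norm (C / (1 + \<xi>)^2 * exp (2 * C / (1 + \<xi>))) \<le> C * exp (2 * C) / (1 + \<xi>)^2"
      if "\<xi> \<ge> x" for \<xi>
      using that x C exp_le[of \<xi>] by (simp add: abs_mult divide_right_mono mult_left_mono)
    show "((\<lambda>\<xi>. - exp (2 * C / (1 + \<xi>)) / 2) has_vector_derivative
        C / (1 + \<xi>)^2 * exp (2 * C / (1 + \<xi>))) (at \<xi> within {x..})" if "\<xi> \<ge> x" for \<xi>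
    proof -
      have "1 + \<xi> \<noteq> 0" using that x by auto
      then have "((\<lambda>\<xi>. - exp (2 * C / (1 + \<xi>)) / 2) has_real_derivative
          - (exp (2 * C / (1 + \<xi>)) * (- 2 * C / (1 + \<xi>)^2)) / 2) (at \<xi> within {x..})"
        by (auto intro!: derivative_eq_intros simp: power2_eq_square)
      then show ?thesis by (simp add: has_real_derivative_iff_has_vector_derivative mult_ac)
    qed
    show "((\<lambda>\<xi>. - exp (2 * C / (1 + \<xi>)) / 2) \<longlongrightarrow> - 1 / 2) at_top"
      by real_asymp
  qed (use x in auto)
  then show ?thesis by (simp add: diff_divide_distrib)
qed

text \<open>One Picard step for a Volterra equation with kernel bounded by \<open>C / (1 + \<xi>)^2\<close>:
  the weight \<open>w \<xi> = exp (2 * C / (1 + \<xi>))\<close> is chosen so that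
  \<open>\<integral>\<^sub>y\<^sup>\<infinity> C / (1 + \<xi>)^2 * w \<xi> = (w y - 1) / 2\<close>.\<close>

lemma volterra_step_bound:
  fixes g :: "real \<Rightarrow> complex" and F e :: complex
  assumes int: "(g has_integral (F - e)) {y..}" and y: "y \<ge> 0"
    and C: "C \<ge> 0" and S: "S \<ge> 0" and F: "norm F \<le> \<epsilon>"
    and g: "\<And>\<xi>. \<xi> \<ge> y \<Longrightarrow> norm (g \<xi>) \<le> S * (C / (1 + \<xi>)^2 * exp (2 * C / (1 + \<xi>)))"
  shows "norm e \<le> (\<epsilon> + S / 2) * exp (2 * C / (1 + y))"
proof -
  define w where "w = exp (2 * C / (1 + y))"
  have w1: "1 \<le> w" unfolding w_def using C y by simp
  have weight: "((\<lambda>\<xi>. S * (C / (1 + \<xi>)^2 * exp (2 * C / (1 + \<xi>)))) has_integral S * ((w - 1) / 2)) {y..}"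
    unfolding w_def by (intro has_integral_mult_right has_integral_weighted_inverse_square C y)
  have "e = F - integral {y..} g" using int by (simp add: integral_unique)
  then have "norm e \<le> norm F + norm (integral {y..} g)"
    by (metis norm_triangle_ineq4)
  also have "norm (integral {y..} g) \<le> S * ((w - 1) / 2)"
    using integral_norm_bound_integral[OF has_integral_integrable[OF int] has_integral_integrable[OF weight]] g
      integral_unique[OF weight] by fastforce
  finally have "norm e \<le> \<epsilon> + S * ((w - 1) / 2)" using F by linarith
  also have "\<dots> \<le> (\<epsilon> + S / 2) * w"
    using mult_left_mono[OF w1 order_trans[OF norm_ge_zero F]] S by (simp add: field_simps)
  finally show ?thesis unfolding w_def .
qed

locale volterra_pair =
  fixes k :: complex and lam C \<epsilon> :: real and f :: "real \<Rightarrow> real" and eu ev Fu Fv :: "real \<Rightarrow> complex"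
  assumes Ik: "Im k \<ge> 0" and lam: "\<bar>lam\<bar> = 1" and C: "C \<ge> 0"
    and f: "\<And>x. x \<ge> 0 \<Longrightarrow> \<bar>f x\<bar> \<le> C / (1 + x)^2"
    and iu: "\<And>x. x \<ge> 0 \<Longrightarrow> ((\<lambda>\<xi>. exp (2 * \<i> * k * of_real (\<xi> - x)) * of_real (f \<xi>) * ev \<xi>)
                 has_integral (Fu x - eu x)) {x..}"
    and iv: "\<And>x. x \<ge> 0 \<Longrightarrow> ((\<lambda>\<xi>. of_real lam * of_real (f \<xi>) * eu \<xi>)
                 has_integral (Fv x - ev x)) {x..}"
    and forcing: "\<And>x. x \<ge> 0 \<Longrightarrow> norm (Fu x) \<le> \<epsilon> \<and> norm (Fv x) \<le> \<epsilon>"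
begin

definition weight :: "real \<Rightarrow> real" where
  "weight y = exp (2 * C / (1 + y))"

lemma step:
  assumes S: "S \<ge> 0" and hyp: "\<And>y. y \<ge> 0 \<Longrightarrow> norm (eu y) \<le> S * weight y \<and> norm (ev y) \<le> S * weight y"
    and y: "y \<ge> 0"
  shows "norm (eu y) \<le> (\<epsilon> + S / 2) * weight y \<and> norm (ev y) \<le> (\<epsilon> + S / 2) * weight y"
proof
  show "norm (eu y) \<le> (\<epsilon> + S / 2) * weight y"
    unfolding weight_def
  proof (rule volterra_step_bound[OF iu[OF y] y C S])
    fix \<xi> assume "\<xi> \<ge> y"
    then have "norm (exp (2 * \<i> * k * of_real (\<xi> - y))) * \<bar>f \<xi>\<bar> * norm (ev \<xi>)
        \<le> 1 * (C / (1 + \<xi>)^2) * (S * weight \<xi>)"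
      using y norm_exp_upper_halfplane[OF Ik, of "\<xi> - y"] f[of \<xi>] hyp[of \<xi>]
      by (intro mult_mono) auto
    then show "norm (exp (2 * \<i> * k * of_real (\<xi> - y)) * of_real (f \<xi>) * ev \<xi>)
        \<le> S * (C / (1 + \<xi>)^2 * exp (2 * C / (1 + \<xi>)))"
      unfolding norm_mult weight_def by (simp add: mult_ac)
  qed (use forcing y in auto)
  show "norm (ev y) \<le> (\<epsilon> + S / 2) * weight y"
    unfolding weight_def
  proof (rule volterra_step_bound[OF iv[OF y] y C S])
    fix \<xi> assume "\<xi> \<ge> y"
    then have "\<bar>f \<xi>\<bar> * norm (eu \<xi>) \<le> (C / (1 + \<xi>)^2) * (S * weight \<xi>)"
      using y f[of \<xi>] hyp[of \<xi>] by (intro mult_mono) auto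
    then show "norm (of_real lam * of_real (f \<xi>) * eu \<xi>)
        \<le> S * (C / (1 + \<xi>)^2 * exp (2 * C / (1 + \<xi>)))"
      using lam unfolding norm_mult weight_def by (simp add: mult_ac)
  qed (use forcing y in auto)
qed

text \<open>Iterating the step, a bounded solution is bounded by \<open>2 * \<epsilon> * weight\<close>,
  the fixed point of \<open>S \<mapsto> \<epsilon> + S / 2\<close>.\<close>

lemma bound:
  assumes bounded: "\<And>x. x \<ge> 0 \<Longrightarrow> norm (eu x) \<le> M \<and> norm (ev x) \<le> M" and x: "x \<ge> 0"
  shows "norm (eu x) \<le> 2 * \<epsilon> * exp (2 * C) \<and> norm (ev x) \<le> 2 * \<epsilon> * exp (2 * C)"
proof -
  have w1: "1 \<le> weight y" if "y \<ge> 0" for y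
    using that C unfolding weight_def by simp
  have eps: "\<epsilon> \<ge> 0" using forcing[of 0] norm_ge_zero[of "Fu 0"] by linarith
  have M: "M \<ge> 0" using bounded[of 0] norm_ge_zero[of "eu 0"] by linarith
  have iterate: "\<forall>y\<ge>0. norm (eu y) \<le> (2 * \<epsilon> + M / 2^n) * weight y
      \<and> norm (ev y) \<le> (2 * \<epsilon> + M / 2^n) * weight y" for n
  proof (induction n)
    case 0
    have "M \<le> (2 * \<epsilon> + M) * weight y" if "y \<ge> 0" for y
      using w1[OF that] eps M by (smt (verit) mult_le_cancel_left1 mult_nonneg_nonneg)
    then show ?case using bounded by (auto intro: order_trans)
  next
    case (Suc n)
    have S: "2 * \<epsilon> + M / 2^n \<ge> 0" using eps M by simp
    have "\<epsilon> + (2 * \<epsilon> + M / 2^n) / 2 = 2 * \<epsilon> + M / 2^Suc n" by (simp add: field_simps)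
    then show ?case using step[OF S] Suc.IH by (metis (no_types, lifting))
  qed
  have "(\<lambda>n. (2 * \<epsilon> + M / 2^n) * weight x) \<longlonglongrightarrow> (2 * \<epsilon> + 0) * weight x"
    by (intro tendsto_intros LIMSEQ_divide_realpow_zero) auto
  then have "norm (eu x) \<le> 2 * \<epsilon> * weight x \<and> norm (ev x) \<le> 2 * \<epsilon> * weight x"
    using iterate x by (auto intro: tendsto_le[OF trivial_limit_sequentially _ tendsto_const])
  moreover have "2 * \<epsilon> * weight x \<le> 2 * \<epsilon> * exp (2 * C)"
    using x C eps divide_left_mono[of 1 "1 + x" "2 * C"] unfolding weight_def
    by (intro mult_left_mono) auto
  ultimately show ?thesis by linarith
qed

end

definition inv_2ik :: "complex \<Rightarrow> complex" where
  "inv_2ik k = 1 / (2 * \<i> * k)"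

lemma norm_inv_2ik: "norm (inv_2ik k) = 1 / (2 * norm k)"
  unfolding inv_2ik_def by (simp add: norm_divide norm_mult)

lemma inv_2ik_tendsto_0: "(inv_2ik \<longlongrightarrow> 0) F" if "F \<le> at_infinity"
proof -
  have "((\<lambda>k. inverse (2 * \<i>) * inverse k) \<longlongrightarrow> inverse (2 * \<i>) * 0) at_infinity"
    by (intro tendsto_intros tendsto_inverse_0)
  then show ?thesis
    using tendsto_mono[OF that] unfolding inv_2ik_def by (simp add: field_simps)
qed

section \<open>Asymptotic solution of the spatial problem\<close>

locale decaying_potential =
  fixes lam :: real and f0 f1 f2 f3 f4 :: "real \<Rightarrow> real"
  assumes lam: "\<bar>lam\<bar> = 1"
    and deriv0: "\<And>x. (f0 has_real_derivative f1 x) (at x)"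
    and deriv1: "\<And>x. (f1 has_real_derivative f2 x) (at x)"
    and deriv2: "\<And>x. (f2 has_real_derivative f3 x) (at x)"
    and deriv3: "\<And>x. (f3 has_real_derivative f4 x) (at x)"
    and cont4: "continuous_on UNIV f4"
    and decay0: "quad_decay f0" and decay1: "quad_decay f1" and decay2: "quad_decay f2"
    and decay3: "quad_decay f3" and decay4: "quad_decay f4"
begin

lemmas deriv_within = deriv0[THEN DERIV_subset] deriv1[THEN DERIV_subset]
  deriv2[THEN DERIV_subset] deriv3[THEN DERIV_subset]

lemma continuous_on_f:
  "continuous_on S f0" "continuous_on S f1" "continuous_on S f2" "continuous_on S f3"
  "continuous_on S f4"
  by (auto intro: continuous_on_subset[OF cont4] continuous_on_subset[OF DERIV_continuous_on]
      deriv0 deriv1 deriv2 deriv3)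

text \<open>Coefficients of the formal solution \<open>u = \<Sum>\<^sub>j u\<^sub>j w\<^sup>j\<close>, \<open>v = 1 + \<Sum>\<^sub>j v\<^sub>j w\<^sup>j\<close>,
  \<open>w = 1 / (2 i k)\<close>, of \<open>2 i k u + u' = f0 v\<close>, \<open>v' = lam f0 u\<close> with \<open>v\<^sub>j(\<infinity>) = 0\<close>:
  \<open>u\<^sub>1 = f0\<close>, \<open>u\<^sub>j\<^sub>+\<^sub>1 = f0 v\<^sub>j - u\<^sub>j'\<close> and \<open>v\<^sub>j' = lam f0 u\<^sub>j\<close>.
  The primed constants are the derivatives, written out.\<close>

definition "v1 y = - lam * integral {y..} (\<lambda>\<xi>. f0 \<xi> ^ 2)"
definition "u2 y = f0 y * v1 y - f1 y"
definition "u2' y = f1 y * v1 y + lam * f0 y ^ 3 - f2 y"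
definition "u2'' y = f2 y * v1 y + 4 * lam * f0 y ^ 2 * f1 y - f3 y"
definition "u2''' y = f3 y * v1 y + 5 * lam * f0 y ^ 2 * f2 y + 8 * lam * f0 y * f1 y ^ 2 - f4 y"
definition "v2 y = v1 y ^ 2 / 2 - lam * f0 y ^ 2 / 2"
definition "v2' y = lam * f0 y * u2 y"
definition "v2'' y = lam * (f1 y * u2 y + f0 y * u2' y)"
definition "u3 y = f0 y * v2 y - u2' y"
definition "u3' y = f1 y * v2 y + f0 y * v2' y - u2'' y"
definition "u3'' y = f2 y * v2 y + 2 * f1 y * v2' y + f0 y * v2'' y - u2''' y"
definition "v3 y = - lam * integral {y..} (\<lambda>\<xi>. f0 \<xi> * u3 \<xi>)"
definition "u4 y = f0 y * v3 y - u3' y"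
definition "u4' y = f1 y * v3 y + lam * f0 y ^ 2 * u3 y - u3'' y"

lemma continuous_on_f0_squared: "continuous_on {0..} (\<lambda>x. f0 x ^ 2)"
  by (intro continuous_intros continuous_on_f)

lemma quad_decay_f0_squared: "quad_decay (\<lambda>x. f0 x ^ 2)"
  using decay0 by (intro quad_decay_power) auto

lemma v1_has_derivative: "x \<ge> 0 \<Longrightarrow> (v1 has_real_derivative (lam * f0 x ^ 2)) (at x within {0..})"
  using quad_decay_tail_integral(1)[OF continuous_on_f0_squared quad_decay_f0_squared]
  unfolding v1_def[abs_def] has_real_derivative_iff_has_vector_derivative[symmetric]
  by (auto intro!: derivative_eq_intros)

lemma v1_bounded: "halfline_bounded v1"
  using quad_decay_tail_integral(2)[OF continuous_on_f0_squared quad_decay_f0_squared]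
  unfolding v1_def[abs_def] by (fast intro: quad_decay_intros)

lemma v1_tendsto_0: "(v1 \<longlongrightarrow> 0) at_top"
  using quad_decay_tail_integral(3)[OF continuous_on_f0_squared quad_decay_f0_squared]
    tendsto_mult_right_zero[of _ at_top "- lam"]
  unfolding v1_def[abs_def] by simp

lemma u2_has_derivative: "x \<ge> 0 \<Longrightarrow> (u2 has_real_derivative u2' x) (at x within {0..})"
  unfolding u2_def[abs_def] u2'_def
  by (auto intro!: derivative_eq_intros v1_has_derivative deriv_within
      simp: power3_eq_cube power2_eq_square algebra_simps)

lemma u2'_has_derivative: "x \<ge> 0 \<Longrightarrow> (u2' has_real_derivative u2'' x) (at x within {0..})"
  unfolding u2'_def[abs_def] u2''_def
  by (auto intro!: derivative_eq_intros v1_has_derivative deriv_within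
      simp: power3_eq_cube power2_eq_square algebra_simps)

lemma u2''_has_derivative: "x \<ge> 0 \<Longrightarrow> (u2'' has_real_derivative u2''' x) (at x within {0..})"
  unfolding u2''_def[abs_def] u2'''_def
  by (auto intro!: derivative_eq_intros v1_has_derivative deriv_within
      simp: power3_eq_cube power2_eq_square algebra_simps)

lemma v2_has_derivative: "x \<ge> 0 \<Longrightarrow> (v2 has_real_derivative v2' x) (at x within {0..})"
  unfolding v2_def[abs_def] v2'_def u2_def
  by (auto intro!: derivative_eq_intros v1_has_derivative deriv_within
      simp: power3_eq_cube power2_eq_square algebra_simps)

lemma v2'_has_derivative: "x \<ge> 0 \<Longrightarrow> (v2' has_real_derivative v2'' x) (at x within {0..})"
  unfolding v2'_def[abs_def] v2''_def
  by (auto intro!: derivative_eq_intros u2_has_derivative deriv_within simp: algebra_simps)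

lemma u3_has_derivative: "x \<ge> 0 \<Longrightarrow> (u3 has_real_derivative u3' x) (at x within {0..})"
  unfolding u3_def[abs_def] u3'_def
  by (auto intro!: derivative_eq_intros v2_has_derivative u2'_has_derivative deriv_within
      simp: algebra_simps)

lemma u3'_has_derivative: "x \<ge> 0 \<Longrightarrow> (u3' has_real_derivative u3'' x) (at x within {0..})"
  unfolding u3'_def[abs_def] u3''_def
  by (auto intro!: derivative_eq_intros v2_has_derivative v2'_has_derivative u2''_has_derivative
      deriv_within simp: algebra_simps)

lemmas continuous_on_coefficients =
  v1_has_derivative[THEN DERIV_continuous_on] u2_has_derivative[THEN DERIV_continuous_on]
  u2'_has_derivative[THEN DERIV_continuous_on] u2''_has_derivative[THEN DERIV_continuous_on]
  v2_has_derivative[THEN DERIV_continuous_on] v2'_has_derivative[THEN DERIV_continuous_on]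
  u3_has_derivative[THEN DERIV_continuous_on] u3'_has_derivative[THEN DERIV_continuous_on]

lemma quad_decay_coefficients:
  "quad_decay u2" "quad_decay u2'" "quad_decay u2''" "quad_decay u2'''" "halfline_bounded v2"
  "quad_decay v2'" "quad_decay v2''" "quad_decay u3" "quad_decay u3'" "quad_decay u3''"
proof -
  note decay = decay0 decay1 decay2 decay3 decay4 v1_bounded
  show u2: "quad_decay u2" and u2': "quad_decay u2'" and "quad_decay u2''" and u2''': "quad_decay u2'''"
    and v2: "halfline_bounded v2"
    unfolding u2_def[abs_def] u2'_def[abs_def] u2''_def[abs_def] u2'''_def[abs_def] v2_def[abs_def]
    using decay by (fast intro: quad_decay_intros)+
  then show v2': "quad_decay v2'" and v2'': "quad_decay v2''"
    unfolding v2'_def[abs_def] v2''_def[abs_def] using decay by (fast intro: quad_decay_intros)+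
  show "quad_decay u3" "quad_decay u3'" "quad_decay u3''"
    unfolding u3_def[abs_def] u3'_def[abs_def] u3''_def[abs_def]
    using decay u2 u2' \<open>quad_decay u2''\<close> u2''' v2 v2' v2'' by (fast intro: quad_decay_intros)+
qed

lemma continuous_on_f0_u3: "continuous_on {0..} (\<lambda>x. f0 x * u3 x)"
  by (intro continuous_intros continuous_on_f continuous_on_coefficients) auto

lemma quad_decay_f0_u3: "quad_decay (\<lambda>x. f0 x * u3 x)"
  using decay0 quad_decay_coefficients by (fast intro: quad_decay_intros)

lemma v3_has_derivative: "x \<ge> 0 \<Longrightarrow> (v3 has_real_derivative (lam * f0 x * u3 x)) (at x within {0..})"
  using quad_decay_tail_integral(1)[OF continuous_on_f0_u3 quad_decay_f0_u3]
  unfolding v3_def[abs_def] has_real_derivative_iff_has_vector_derivative[symmetric]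
  by (auto intro!: derivative_eq_intros)

lemma v3_bounded: "halfline_bounded v3"
  using quad_decay_tail_integral(2)[OF continuous_on_f0_u3 quad_decay_f0_u3]
  unfolding v3_def[abs_def] by (fast intro: quad_decay_intros)

lemma v3_tendsto_0: "(v3 \<longlongrightarrow> 0) at_top"
  using quad_decay_tail_integral(3)[OF continuous_on_f0_u3 quad_decay_f0_u3]
    tendsto_mult_right_zero[of _ at_top "- lam"]
  unfolding v3_def[abs_def] by simp

lemma u4_has_derivative: "x \<ge> 0 \<Longrightarrow> (u4 has_real_derivative u4' x) (at x within {0..})"
  unfolding u4_def[abs_def] u4'_def
  by (auto intro!: derivative_eq_intros v3_has_derivative u3'_has_derivative deriv_within
      simp: algebra_simps power2_eq_square)

lemma continuous_on_u4: "continuous_on {0..} u4" "continuous_on {0..} u4'"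
  using u4_has_derivative[THEN DERIV_continuous_on] v3_has_derivative[THEN DERIV_continuous_on]
  unfolding u4'_def[abs_def] u3''_def[abs_def] u2'''_def[abs_def] v2''_def[abs_def]
  by (auto intro!: continuous_intros continuous_on_f continuous_on_coefficients)

lemma quad_decay_u4: "quad_decay u4" "quad_decay u4'"
  unfolding u4_def[abs_def] u4'_def[abs_def]
  using decay0 decay1 v3_bounded quad_decay_coefficients by (fast intro: quad_decay_intros)+

lemma v2_tendsto_0: "(v2 \<longlongrightarrow> 0) at_top"
  using v1_tendsto_0 quad_decay_tendsto_0[OF decay0]
  unfolding v2_def[abs_def]
  by (auto intro!: tendsto_eq_intros)

definition "approx_u k y = of_real (f0 y) * inv_2ik k + of_real (u2 y) * inv_2ik k ^ 2
   + of_real (u3 y) * inv_2ik k ^ 3 + of_real (u4 y) * inv_2ik k ^ 4"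
definition "approx_u' k y = of_real (f1 y) * inv_2ik k + of_real (u2' y) * inv_2ik k ^ 2
   + of_real (u3' y) * inv_2ik k ^ 3 + of_real (u4' y) * inv_2ik k ^ 4"
definition "approx_v k y = 1 + of_real (v1 y) * inv_2ik k + of_real (v2 y) * inv_2ik k ^ 2
   + of_real (v3 y) * inv_2ik k ^ 3"
definition "approx_v' k y = of_real (lam * f0 y ^ 2) * inv_2ik k + of_real (v2' y) * inv_2ik k ^ 2
   + of_real (lam * f0 y * u3 y) * inv_2ik k ^ 3"

lemma approx_u_has_derivative:
  "x \<ge> 0 \<Longrightarrow> (approx_u k has_vector_derivative approx_u' k x) (at x within {0..})"
  unfolding approx_u_def[abs_def] approx_u'_def
  by (auto intro!: derivative_eq_intros deriv_within u2_has_derivative u3_has_derivative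
      u4_has_derivative)

lemma approx_v_has_derivative:
  "x \<ge> 0 \<Longrightarrow> (approx_v k has_vector_derivative approx_v' k x) (at x within {0..})"
  unfolding approx_v_def[abs_def] approx_v'_def
  by (auto intro!: derivative_eq_intros v1_has_derivative v2_has_derivative v3_has_derivative)

lemma approx_u_residual:
  assumes "k \<noteq> 0"
  shows "2 * \<i> * k * approx_u k y + approx_u' k y
           = of_real (f0 y) * approx_v k y + of_real (u4' y) * inv_2ik k ^ 4"
proof -
  define w where "w = inv_2ik k"
  have "2 * \<i> * k * approx_u k y = (2 * \<i> * k * w) * (of_real (f0 y) + of_real (u2 y) * w
     + of_real (u3 y) * w^2 + of_real (u4 y) * w^3)"
    unfolding approx_u_def w_def[symmetric] by algebra
  also have "2 * \<i> * k * w = 1" using assms unfolding w_def inv_2ik_def by simp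
  finally have "2 * \<i> * k * approx_u k y = of_real (f0 y) + of_real (u2 y) * w
     + of_real (u3 y) * w^2 + of_real (u4 y) * w^3" by simp
  then show ?thesis
    unfolding approx_u'_def approx_v_def w_def[symmetric]
    by (simp add: u2_def u3_def u4_def algebra_simps power2_eq_square power3_eq_cube)
qed

lemma approx_v_residual:
  "of_real lam * of_real (f0 y) * approx_u k y
     = approx_v' k y + of_real (lam * f0 y * u4 y) * inv_2ik k ^ 4"
  unfolding approx_u_def approx_v'_def v2'_def by (simp add: algebra_simps power2_eq_square)

lemma approx_u_bounded: "halfline_bounded (approx_u k)"
  and approx_v_bounded: "halfline_bounded (approx_v k)"
  and quad_decay_approx_v': "quad_decay (approx_v' k)"
  unfolding approx_u_def[abs_def] approx_v_def[abs_def] approx_v'_def[abs_def]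
  using decay0 quad_decay_coefficients quad_decay_u4 v1_bounded v3_bounded quad_decay_f0_u3
  by (fast intro: quad_decay_intros)+

lemma approx_u_tendsto_0: "(approx_u k \<longlongrightarrow> 0) at_top"
  using quad_decay_tendsto_0[OF decay0] quad_decay_tendsto_0[OF quad_decay_coefficients(1)]
    quad_decay_tendsto_0[OF quad_decay_coefficients(8)] quad_decay_tendsto_0[OF quad_decay_u4(1)]
  unfolding approx_u_def[abs_def] by (auto intro!: tendsto_eq_intros)

lemma approx_v_tendsto_1: "(approx_v k \<longlongrightarrow> 1) at_top"
  using v1_tendsto_0 v2_tendsto_0 v3_tendsto_0
  unfolding approx_v_def[abs_def] by (auto intro!: tendsto_eq_intros)

lemma approx_u_integral_equation:
  assumes k: "k \<noteq> 0" "Im k \<ge> 0" and x: "x \<ge> 0"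
  shows "((\<lambda>\<xi>. exp (2 * \<i> * k * of_real (\<xi> - x)) * of_real (f0 \<xi>) * approx_v k \<xi>) has_integral
     (- approx_u k x - inv_2ik k ^ 4 *
        integral {x..} (\<lambda>\<xi>. exp (2 * \<i> * k * of_real (\<xi> - x)) * of_real (u4' \<xi>)))) {x..}"
proof -
  define r where "r \<xi> = of_real (f0 \<xi>) * approx_v k \<xi> + of_real (u4' \<xi>) * inv_2ik k ^ 4" for \<xi>
  have "quad_decay r" unfolding r_def[abs_def]
    using decay0 approx_v_bounded quad_decay_u4 by (fast intro: quad_decay_intros)
  then obtain Kr where Kr: "\<And>\<xi>. \<xi> \<ge> 0 \<Longrightarrow> norm (r \<xi>) \<le> Kr / (1 + \<xi>)^2"
    using quad_decayE by blast
  have cont_r: "continuous_on {0..} r"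
    unfolding r_def[abs_def] approx_v_def[abs_def]
    using continuous_on_u4 v3_has_derivative[THEN DERIV_continuous_on]
    by (intro continuous_intros continuous_on_f continuous_on_coefficients) auto
  have "((\<lambda>\<xi>. exp (2 * \<i> * k * of_real (\<xi> - x)) * r \<xi>) has_integral (- approx_u k x)) {x..}"
    by (rule has_integral_oscillatory_primitive[OF k(2) x cont_r Kr approx_u_has_derivative _
          approx_u_tendsto_0]) (assumption+, unfold r_def, rule approx_u_residual[OF k(1)])
  moreover obtain K4 where "\<And>\<xi>. \<xi> \<ge> 0 \<Longrightarrow> norm (of_real (u4' \<xi>) :: complex) \<le> K4 / (1 + \<xi>)^2"
    using quad_decayE[OF quad_decay_of_real[OF quad_decay_u4(2)]] by blast
  then have "(\<lambda>\<xi>. exp (2 * \<i> * k * of_real (\<xi> - x)) * of_real (u4' \<xi>)) integrable_on {x..}"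
    using continuous_on_u4(2)
    by (intro oscillatory_integral_bound(1)[OF k(2) x] continuous_intros) auto
  ultimately have "((\<lambda>\<xi>. exp (2 * \<i> * k * of_real (\<xi> - x)) * r \<xi>
      - inv_2ik k ^ 4 * (exp (2 * \<i> * k * of_real (\<xi> - x)) * of_real (u4' \<xi>))) has_integral
      (- approx_u k x - inv_2ik k ^ 4 *
        integral {x..} (\<lambda>\<xi>. exp (2 * \<i> * k * of_real (\<xi> - x)) * of_real (u4' \<xi>)))) {x..}"
    by (intro has_integral_diff has_integral_mult_right integrable_integral)
  then show ?thesis unfolding r_def by (simp add: algebra_simps)
qed

lemma approx_v_integral_equation:
  assumes x: "x \<ge> 0"
  shows "((\<lambda>\<xi>. of_real lam * of_real (f0 \<xi>) * approx_u k \<xi>) has_integral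
     (1 - approx_v k x + inv_2ik k ^ 4 * integral {x..} (\<lambda>\<xi>. of_real (lam * f0 \<xi> * u4 \<xi>)))) {x..}"
proof -
  have sub: "{x..} \<subseteq> {0..}" using x by auto
  obtain K where K: "\<And>\<xi>. \<xi> \<ge> 0 \<Longrightarrow> norm (approx_v' k \<xi>) \<le> K / (1 + \<xi>)^2"
    using quad_decayE[OF quad_decay_approx_v'] by blast
  have "(approx_v' k has_integral (1 - approx_v k x)) {x..}"
  proof (rule has_integral_halfline_FTC[where C=K])
    show "continuous_on {x..} (approx_v' k)"
      unfolding approx_v'_def[abs_def]
      by (intro continuous_intros continuous_on_subset[OF _ sub] continuous_on_f
          continuous_on_coefficients) auto
    show "(approx_v k has_vector_derivative approx_v' k \<xi>) (at \<xi> within {x..})" if "\<xi> \<ge> x" for \<xi>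
      using approx_v_has_derivative[of \<xi> k] that x
      by (auto intro: has_vector_derivative_within_subset[OF _ sub])
  qed (use x K approx_v_tendsto_1 in auto)
  moreover have "quad_decay (\<lambda>\<xi>. lam * f0 \<xi> * u4 \<xi>)"
    using decay0 quad_decay_u4 by (fast intro: quad_decay_intros)
  then have "(\<lambda>\<xi>. of_real (lam * f0 \<xi> * u4 \<xi>) :: complex) integrable_on {x..}"
    using x continuous_on_u4(1)
    by (intro quad_decay_integrable_on_halfline continuous_intros continuous_on_f quad_decay_of_real)
  ultimately have "((\<lambda>\<xi>. approx_v' k \<xi> + inv_2ik k ^ 4 * of_real (lam * f0 \<xi> * u4 \<xi>)) has_integral
      ((1 - approx_v k x) + inv_2ik k ^ 4 * integral {x..} (\<lambda>\<xi>. of_real (lam * f0 \<xi> * u4 \<xi>)))) {x..}"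
    by (intro has_integral_add has_integral_mult_right integrable_integral)
  then show ?thesis using approx_v_residual by (simp add: algebra_simps)
qed

lemma approx_error_bound:
  fixes u v :: "real \<Rightarrow> complex"
  assumes k: "k \<noteq> 0" "Im k \<ge> 0"
    and C0: "C0 \<ge> 0" "\<And>x. x \<ge> 0 \<Longrightarrow> \<bar>f0 x\<bar> \<le> C0 / (1 + x)^2"
    and K4: "\<And>x. x \<ge> 0 \<Longrightarrow> \<bar>u4' x\<bar> \<le> K4 / (1 + x)^2"
    and K5: "\<And>x. x \<ge> 0 \<Longrightarrow> \<bar>lam * f0 x * u4 x\<bar> \<le> K5 / (1 + x)^2"
    and bounded: "\<And>x. x \<ge> 0 \<Longrightarrow> norm (u x) \<le> M \<and> norm (v x) \<le> M"
    and iu: "\<And>x. x \<ge> 0 \<Longrightarrow> ((\<lambda>\<xi>. exp (2 * \<i> * k * of_real (\<xi> - x)) * of_real (f0 \<xi>) * v \<xi>)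
               has_integral (- u x)) {x..}"
    and iv: "\<And>x. x \<ge> 0 \<Longrightarrow> ((\<lambda>\<xi>. of_real lam * of_real (f0 \<xi>) * u \<xi>)
               has_integral (1 - v x)) {x..}"
  shows "norm (u 0 - approx_u k 0) \<le> 2 * (norm (inv_2ik k) ^ 4 * (K4 + K5)) * exp (2 * C0)
       \<and> norm (v 0 - approx_v k 0) \<le> 2 * (norm (inv_2ik k) ^ 4 * (K4 + K5)) * exp (2 * C0)"
proof -
  have K_nonneg: "K4 \<ge> 0" "K5 \<ge> 0"
    using order_trans[OF abs_ge_zero K4[of 0]] order_trans[OF abs_ge_zero K5[of 0]] by simp_all
  define Ru where "Ru x = integral {x..} (\<lambda>\<xi>. exp (2 * \<i> * k * of_real (\<xi> - x)) * of_real (u4' \<xi>))"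
    for x
  define Rv where "Rv x = integral {x..} (\<lambda>\<xi>. of_real (lam * f0 \<xi> * u4 \<xi>) :: complex)" for x
  have Ru: "norm (Ru x) \<le> K4" if "x \<ge> 0" for x
    using oscillatory_integral_bound(2)[OF k(2) that, of "\<lambda>\<xi>. of_real (u4' \<xi>)" K4]
      continuous_on_u4 K4 unfolding Ru_def by (auto intro!: continuous_intros)
  have Rv: "norm (Rv x) \<le> K5" if "x \<ge> 0" for x
    unfolding Rv_def using that continuous_on_u4(1)
  proof (intro norm_integral_halfline_bounded)
    show "norm (of_real (lam * f0 \<xi> * u4 \<xi>) :: complex) \<le> K5 / (1 + \<xi>)^2" if "\<xi> \<ge> x" for \<xi>
      using K5[of \<xi>] that \<open>x \<ge> 0\<close> by (simp only: norm_of_real)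
  qed (auto intro!: continuous_intros continuous_on_f intro: continuous_on_subset)
  obtain MU MV where "\<And>x. x \<ge> 0 \<Longrightarrow> norm (approx_u k x) \<le> MU" "\<And>x. x \<ge> 0 \<Longrightarrow> norm (approx_v k x) \<le> MV"
    using approx_u_bounded approx_v_bounded unfolding halfline_bounded_def by metis
  then have bounded': "norm (u x - approx_u k x) \<le> M + MU + MV \<and> norm (v x - approx_v k x) \<le> M + MU + MV"
    if "x \<ge> 0" for x
    using bounded[OF that] that norm_triangle_ineq4[of "u x"] norm_triangle_ineq4[of "v x"]
    by (smt (verit) norm_ge_zero)
  have iu': "((\<lambda>\<xi>. exp (2 * \<i> * k * of_real (\<xi> - x)) * of_real (f0 \<xi>) * (v \<xi> - approx_v k \<xi>))
      has_integral (inv_2ik k ^ 4 * Ru x - (u x - approx_u k x))) {x..}" if "x \<ge> 0" for x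
    using has_integral_diff[OF iu[OF that] approx_u_integral_equation[OF k that]]
    unfolding Ru_def by (simp add: algebra_simps)
  have iv': "((\<lambda>\<xi>. of_real lam * of_real (f0 \<xi>) * (u \<xi> - approx_u k \<xi>))
      has_integral (- (inv_2ik k ^ 4 * Rv x) - (v x - approx_v k x))) {x..}" if "x \<ge> 0" for x
    using has_integral_diff[OF iv[OF that] approx_v_integral_equation[OF that, of k]]
    unfolding Rv_def by (simp add: algebra_simps)
  have forcing: "norm (inv_2ik k ^ 4 * Ru x) \<le> norm (inv_2ik k) ^ 4 * (K4 + K5)
      \<and> norm (- (inv_2ik k ^ 4 * Rv x)) \<le> norm (inv_2ik k) ^ 4 * (K4 + K5)" if "x \<ge> 0" for x
    using Ru[OF that] Rv[OF that] K_nonneg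
    unfolding norm_minus_cancel norm_mult norm_power
    by (intro conjI mult_left_mono) auto
  interpret volterra_pair k lam C0 "norm (inv_2ik k) ^ 4 * (K4 + K5)" f0 "\<lambda>x. u x - approx_u k x"
      "\<lambda>x. v x - approx_v k x" "\<lambda>x. inv_2ik k ^ 4 * Ru x" "\<lambda>x. - (inv_2ik k ^ 4 * Rv x)"
    using k(2) lam C0 iu' iv' forcing by unfold_locales auto
  show ?thesis using bound[OF bounded' order_refl] by simp
qed

lemma approx_u_truncation:
  "norm (z - (of_real (f0 0) * inv_2ik k + of_real (u2 0) * inv_2ik k ^ 2 + of_real (u3 0) * inv_2ik k ^ 3))
     \<le> norm (z - approx_u k 0) + \<bar>u4 0\<bar> * norm (inv_2ik k) ^ 4"
  using norm_triangle_ineq[of "z - approx_u k 0" "of_real (u4 0) * inv_2ik k ^ 4"]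
  unfolding approx_u_def by (simp add: algebra_simps norm_mult norm_power)

lemma approx_v_truncation:
  "norm (z - (1 + of_real (v1 0) * inv_2ik k + of_real (v2 0) * inv_2ik k ^ 2))
     \<le> norm (z - approx_v k 0) + \<bar>v3 0\<bar> * norm (inv_2ik k) ^ 3"
  using norm_triangle_ineq[of "z - approx_v k 0" "of_real (v3 0) * inv_2ik k ^ 3"]
  unfolding approx_v_def by (simp add: algebra_simps norm_mult norm_power)

lemma expansion_at_origin:
  obtains K where "K \<ge> 0"
    "\<And>k u v M. k \<noteq> 0 \<Longrightarrow> Im k \<ge> 0 \<Longrightarrow> norm (inv_2ik k) \<le> 1 \<Longrightarrow>
      (\<And>x. x \<ge> 0 \<Longrightarrow> norm (u x) \<le> M \<and> norm (v x) \<le> M) \<Longrightarrow>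
      (\<And>x. x \<ge> 0 \<Longrightarrow> ((\<lambda>\<xi>. exp (2 * \<i> * k * of_real (\<xi> - x)) * of_real (f0 \<xi>) * v \<xi>)
          has_integral (- u x)) {x..}) \<Longrightarrow>
      (\<And>x. x \<ge> 0 \<Longrightarrow> ((\<lambda>\<xi>. of_real lam * of_real (f0 \<xi>) * u \<xi>) has_integral (1 - v x)) {x..}) \<Longrightarrow>
      norm (u 0 - (of_real (f0 0) * inv_2ik k + of_real (u2 0) * inv_2ik k ^ 2
          + of_real (u3 0) * inv_2ik k ^ 3)) \<le> K * norm (inv_2ik k) ^ 4
      \<and> norm (v 0 - (1 + of_real (v1 0) * inv_2ik k + of_real (v2 0) * inv_2ik k ^ 2))
          \<le> K * norm (inv_2ik k) ^ 3"
proof -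
  have decay5: "quad_decay (\<lambda>x. lam * f0 x * u4 x)"
    using decay0 quad_decay_u4 by (fast intro: quad_decay_intros)
  obtain C0 K4 K5 where C0: "C0 \<ge> 0" "\<And>x. x \<ge> 0 \<Longrightarrow> \<bar>f0 x\<bar> \<le> C0 / (1 + x)^2"
    and K4: "K4 \<ge> 0" "\<And>x. x \<ge> 0 \<Longrightarrow> \<bar>u4' x\<bar> \<le> K4 / (1 + x)^2"
    and K5: "K5 \<ge> 0" "\<And>x. x \<ge> 0 \<Longrightarrow> \<bar>lam * f0 x * u4 x\<bar> \<le> K5 / (1 + x)^2"
    using quad_decayE[OF decay0] quad_decayE[OF quad_decay_u4(2)] quad_decayE[OF decay5]
    unfolding real_norm_def by metis
  define E where "E = 2 * (K4 + K5) * exp (2 * C0)"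
  have E_ge: "E \<ge> 0" unfolding E_def using K4 K5 by simp
  show thesis
  proof (rule that[of "E + \<bar>u4 0\<bar> + \<bar>v3 0\<bar>"])
    show "E + \<bar>u4 0\<bar> + \<bar>v3 0\<bar> \<ge> 0" using E_ge by simp
    fix k u v M
    assume k: "k \<noteq> 0" "Im k \<ge> 0" and w: "norm (inv_2ik k) \<le> 1"
    assume "\<And>x. x \<ge> 0 \<Longrightarrow> norm (u x) \<le> M \<and> norm (v x) \<le> M"
      and "\<And>x. x \<ge> 0 \<Longrightarrow> ((\<lambda>\<xi>. exp (2 * \<i> * k * of_real (\<xi> - x)) * of_real (f0 \<xi>) * v \<xi>)
          has_integral (- u x)) {x..}"
      and "\<And>x. x \<ge> 0 \<Longrightarrow> ((\<lambda>\<xi>. of_real lam * of_real (f0 \<xi>) * u \<xi>) has_integral (1 - v x)) {x..}"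
    from approx_error_bound[OF k C0 K4(2) K5(2) this]
    have err: "norm (u 0 - approx_u k 0) \<le> E * norm (inv_2ik k) ^ 4"
      "norm (v 0 - approx_v k 0) \<le> E * norm (inv_2ik k) ^ 4"
      unfolding E_def by (simp_all add: algebra_simps)
    have "E * norm (inv_2ik k) ^ 4 \<le> E * norm (inv_2ik k) ^ 3"
      using w E_ge by (intro mult_left_mono power_decreasing) auto
    then show "norm (u 0 - (of_real (f0 0) * inv_2ik k + of_real (u2 0) * inv_2ik k ^ 2
          + of_real (u3 0) * inv_2ik k ^ 3)) \<le> (E + \<bar>u4 0\<bar> + \<bar>v3 0\<bar>) * norm (inv_2ik k) ^ 4
      \<and> norm (v 0 - (1 + of_real (v1 0) * inv_2ik k + of_real (v2 0) * inv_2ik k ^ 2))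
          \<le> (E + \<bar>u4 0\<bar> + \<bar>v3 0\<bar>) * norm (inv_2ik k) ^ 3"
      using err approx_u_truncation[of "u 0" k] approx_v_truncation[of "v 0" k]
        mult_nonneg_nonneg[OF abs_ge_zero zero_le_power[OF norm_ge_zero], of "v3 0" "inv_2ik k" 4]
        mult_nonneg_nonneg[OF abs_ge_zero zero_le_power[OF norm_ge_zero], of "u4 0" "inv_2ik k" 3]
      unfolding distrib_right by linarith
  qed
qed

end

section \<open>The mKdV equation and conservation of mass\<close>

lemma smooth2_has_derivative_x:
  assumes "smooth2 q"
  shows "((\<lambda>y. pder ds q y t) has_real_derivative pder (True # ds) q x t) (at x)"
  using assms unfolding smooth2_def by (simp add: pdx_def DERIV_deriv_iff_real_differentiable)

lemma smooth2_has_derivative_t: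
  assumes "smooth2 q"
  shows "((\<lambda>s. pder ds q x s) has_real_derivative pder (False # ds) q x t) (at t)"
  using assms unfolding smooth2_def by (simp add: pdt_def DERIV_deriv_iff_real_differentiable)

lemma smooth2_continuous_on:
  assumes "smooth2 q"
  shows "continuous_on S (\<lambda>z. pder ds q (fst z) (snd z))"
    and "continuous_on A (\<lambda>x. pder ds q x s)"
    and "continuous_on A (\<lambda>s. pder ds q x s)"
proof -
  show c: "continuous_on S (\<lambda>z. pder ds q (fst z) (snd z))" for S
    using assms unfolding smooth2_def by (blast intro: continuous_on_subset)
  show "continuous_on A (\<lambda>x. pder ds q x s)"
    using continuous_on_compose[of A "\<lambda>x. (x, s)" "\<lambda>z. pder ds q (fst z) (snd z)"] c
    by (simp add: o_def continuous_intros)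
  show "continuous_on A (\<lambda>s. pder ds q x s)"
    using continuous_on_compose[of A "\<lambda>s. (x, s)" "\<lambda>z. pder ds q (fst z) (snd z)"] c
    by (simp add: o_def continuous_intros)
qed

lemma rapid_decay_bound:
  assumes "rapid_decay q T" and "finite D"
  obtains C where "C \<ge> 0"
    "\<And>ds x s. ds \<in> D \<Longrightarrow> x \<ge> 0 \<Longrightarrow> s \<in> {0..T} \<Longrightarrow> \<bar>pder ds q x s\<bar> \<le> C / (1 + x)^2"
proof -
  have "\<forall>ds. \<exists>C. \<forall>x\<ge>0. \<forall>s\<in>{0..T}. (1 + x)^2 * \<bar>pder ds q x s\<bar> \<le> C"
    using assms(1) unfolding rapid_decay_def by blast
  then obtain Cf where Cf: "\<And>ds x s. x \<ge> 0 \<Longrightarrow> s \<in> {0..T} \<Longrightarrow> (1 + x)^2 * \<bar>pder ds q x s\<bar> \<le> Cf ds"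
    by metis
  define C where "C = Max (insert 0 (Cf ` D))"
  have C: "0 \<le> C" "\<And>ds. ds \<in> D \<Longrightarrow> Cf ds \<le> C"
    unfolding C_def using assms(2) by auto
  have "\<bar>pder ds q x s\<bar> \<le> C / (1 + x)^2" if "ds \<in> D" "x \<ge> 0" "s \<in> {0..T}" for ds x s
    using order_trans[OF Cf[OF that(2,3)] C(2)[OF that(1)]] that(2) by (simp add: field_simps)
  with C(1) show thesis by (rule that)
qed

lemma rapid_decay_quad_decay:
  assumes "rapid_decay q T" "s \<in> {0..T}"
  shows "quad_decay (\<lambda>x. pder ds q x s)"
  using rapid_decay_bound[OF assms(1), of "{ds}"] assms(2) unfolding quad_decay_def
  by (metis finite.emptyI finite_insert insertI1 real_norm_def)

lemma decaying_potential_slice: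
  assumes lam: "lam \<in> {1, -1}" and smooth: "smooth2 q" and decay: "rapid_decay q T"
    and s: "s \<in> {0..T}"
  shows "decaying_potential lam (\<lambda>x. q x s) (\<lambda>x. pder [True] q x s) (\<lambda>x. pder [True, True] q x s)
           (\<lambda>x. pder [True, True, True] q x s) (\<lambda>x. pder [True, True, True, True] q x s)"
proof -
  have decay: "quad_decay (\<lambda>x. pder ds q x s)" for ds
    by (rule rapid_decay_quad_decay[OF decay s])
  note deriv = smooth2_has_derivative_x[OF smooth, of _ s]
  show ?thesis
  proof
    show "\<bar>lam\<bar> = 1" using lam by auto
    show "((\<lambda>x. q x s) has_real_derivative pder [True] q x s) (at x)" for x
      using deriv[of "[]"] by simp
    show "quad_decay (\<lambda>x. q x s)" using decay[of "[]"] by simp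
    show "continuous_on UNIV (\<lambda>x. pder [True, True, True, True] q x s)"
      by (rule smooth2_continuous_on(2)[OF smooth])
  qed (rule deriv decay)+
qed

definition mKdV_flux :: "real \<Rightarrow> (real \<Rightarrow> real \<Rightarrow> real) \<Rightarrow> real \<Rightarrow> real \<Rightarrow> real" where
  "mKdV_flux lam q x s = 2 * q x s * pder [True, True] q x s - (pder [True] q x s)^2 - 3 * lam * (q x s)^4"

definition mass :: "(real \<Rightarrow> real \<Rightarrow> real) \<Rightarrow> real \<Rightarrow> real" where
  "mass q s = integral {0..} (\<lambda>x. (q x s)^2)"

lemma mKdV_closed_quadrant:
  assumes T: "0 < T" and smooth: "smooth2 q"
    and mKdV: "\<forall>x>0. \<forall>s\<in>{0<..<T}.
        pdt q x s + pdx (pdx (pdx q)) x s - 6 * lam * (q x s)\<^sup>2 * pdx q x s = 0"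
    and x: "x \<ge> 0" and s: "s \<in> {0..T}"
  shows "pder [False] q x s = - pder [True, True, True] q x s + 6 * lam * (q x s)^2 * pder [True] q x s"
proof -
  define H where "H z = pder [False] q (fst z) (snd z) + pder [True, True, True] q (fst z) (snd z)
    - 6 * lam * (q (fst z) (snd z))^2 * pder [True] q (fst z) (snd z)" for z
  have "H (x, s) = 0"
  proof (rule continuous_constant_on_closure[where S="{0<..} \<times> {0<..<T}"])
    show "continuous_on (closure ({0<..} \<times> {0<..<T})) H"
      unfolding H_def using smooth2_continuous_on(1)[OF smooth, of _ "[]"]
      by (intro continuous_intros smooth2_continuous_on(1)[OF smooth]) auto
    show "H z = 0" if "z \<in> {0<..} \<times> {0<..<T}" for z
      using mKdV that unfolding H_def by auto
    show "(x, s) \<in> closure ({0<..} \<times> {0<..<T})"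
      using x s T by (simp add: closure_Times)
  qed
  then show ?thesis unfolding H_def by simp
qed

definition mKdV_flux_x :: "real \<Rightarrow> (real \<Rightarrow> real \<Rightarrow> real) \<Rightarrow> real \<Rightarrow> real \<Rightarrow> real" where
  "mKdV_flux_x lam q x s = 2 * q x s * pder [True, True, True] q x s - 12 * lam * (q x s)^3 * pder [True] q x s"

lemma mKdV_flux_has_derivative_x:
  assumes smooth: "smooth2 q"
  shows "((\<lambda>y. mKdV_flux lam q y s) has_real_derivative mKdV_flux_x lam q x s) (at x)"
proof -
  note dx = smooth2_has_derivative_x[OF smooth, of _ s x]
  show ?thesis
    using dx[of "[]"] dx[of "[True]"] dx[of "[True, True]"] unfolding mKdV_flux_def mKdV_flux_x_def
    by (auto intro!: derivative_eq_intros simp: algebra_simps power2_eq_square power3_eq_cube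
        numeral_eq_Suc)
qed

lemma continuous_on_mKdV_flux_x:
  assumes smooth: "smooth2 q"
  shows "continuous_on S (\<lambda>z. mKdV_flux_x lam q (fst z) (snd z))"
proof -
  note cont = smooth2_continuous_on(1)[OF smooth]
  have "continuous_on S (\<lambda>z. q (fst z) (snd z))" using cont[of S "[]"] by simp
  then show ?thesis unfolding mKdV_flux_x_def by (intro continuous_intros cont)
qed

text \<open>The mKdV equation is the local conservation law \<open>(q\<^sup>2)\<^sub>t = - (mKdV_flux)\<^sub>x\<close>.\<close>

lemma square_has_integral_time:
  assumes T: "0 < T" and smooth: "smooth2 q"
    and mKdV: "\<forall>x>0. \<forall>s\<in>{0<..<T}.
        pdt q x s + pdx (pdx (pdx q)) x s - 6 * lam * (q x s)\<^sup>2 * pdx q x s = 0"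
    and t: "t \<in> {0..T}" and x: "x \<ge> 0"
  shows "((\<lambda>s. - mKdV_flux_x lam q x s) has_integral (q x t)^2 - (q x 0)^2) {0..t}"
proof -
  have dt: "((\<lambda>s. q x s) has_real_derivative pder [False] q x s) (at s)" for s
    using smooth2_has_derivative_t[OF smooth, of "[]"] by simp
  have "((\<lambda>\<sigma>. (q x \<sigma>)^2) has_vector_derivative - mKdV_flux_x lam q x s) (at s within {0..t})"
    if "s \<in> {0..t}" for s
  proof -
    have "s \<in> {0..T}" using that t by auto
    then have e: "pder [False] q x s
        = - pder [True, True, True] q x s + 6 * lam * (q x s)^2 * pder [True] q x s"
      by (rule mKdV_closed_quadrant[OF T smooth mKdV x])
    have "2 * q x s * pder [False] q x s = - mKdV_flux_x lam q x s"
      unfolding mKdV_flux_x_def e by (simp add: algebra_simps power2_eq_square power3_eq_cube)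
    moreover have "((\<lambda>\<sigma>. (q x \<sigma>)^2) has_real_derivative 2 * q x s * pder [False] q x s) (at s within {0..t})"
      by (rule DERIV_subset[OF _ subset_UNIV]) (auto intro!: derivative_eq_intros dt)
    ultimately show ?thesis by (simp add: has_real_derivative_iff_has_vector_derivative)
  qed
  then show ?thesis
    using t fundamental_theorem_of_calculus[of 0 t "\<lambda>\<sigma>. (q x \<sigma>)^2" "\<lambda>s. - mKdV_flux_x lam q x s"]
    by auto
qed

lemma mass_balance_box:
  assumes T: "0 < T" and smooth: "smooth2 q"
    and mKdV: "\<forall>x>0. \<forall>s\<in>{0<..<T}.
        pdt q x s + pdx (pdx (pdx q)) x s - 6 * lam * (q x s)\<^sup>2 * pdx q x s = 0"
    and t: "t \<in> {0..T}" and R: "R \<ge> 0"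
  shows "integral {0..R} (\<lambda>x. (q x t)^2 - (q x 0)^2)
           = integral {0..t} (\<lambda>s. mKdV_flux lam q 0 s - mKdV_flux lam q R s)"
proof -
  have "integral {0..R} (\<lambda>x. (q x t)^2 - (q x 0)^2)
      = integral {0..R} (\<lambda>x. integral {0..t} (\<lambda>s. - mKdV_flux_x lam q x s))"
  proof (rule integral_cong)
    fix x :: real assume "x \<in> {0..R}"
    then show "(q x t)^2 - (q x 0)^2 = integral {0..t} (\<lambda>s. - mKdV_flux_x lam q x s)"
      using integral_unique[OF square_has_integral_time[OF T smooth mKdV t, of x]] by simp
  qed
  also have "\<dots> = integral (cbox 0 R) (\<lambda>x. integral (cbox 0 t) (\<lambda>s. - mKdV_flux_x lam q x s))"
    by simp
  also have "\<dots> = integral (cbox 0 t) (\<lambda>s. integral (cbox 0 R) (\<lambda>x. - mKdV_flux_x lam q x s))"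
    using continuous_on_mKdV_flux_x[OF smooth]
    by (intro integral_swap_continuous) (auto simp: case_prod_beta' intro!: continuous_intros)
  also have "\<dots> = integral {0..t} (\<lambda>s. mKdV_flux lam q 0 s - mKdV_flux lam q R s)"
  proof (simp only: cbox_interval, rule integral_cong)
    fix s
    have "((\<lambda>x. - mKdV_flux_x lam q x s) has_integral (- mKdV_flux lam q R s - - mKdV_flux lam q 0 s)) {0..R}"
      using R by (intro fundamental_theorem_of_calculus)
         (auto intro!: derivative_eq_intros DERIV_subset[OF mKdV_flux_has_derivative_x[OF smooth]]
           simp flip: has_real_derivative_iff_has_vector_derivative)
    then show "integral {0..R} (\<lambda>x. - mKdV_flux_x lam q x s) = mKdV_flux lam q 0 s - mKdV_flux lam q R s"
      by (rule integral_unique[THEN trans]) simp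
  qed
  finally show ?thesis .
qed

lemma mKdV_flux_bound:
  assumes lam: "lam \<in> {1, -1}" and decay: "rapid_decay q T"
  obtains B where "\<And>x s. x \<ge> 0 \<Longrightarrow> s \<in> {0..T} \<Longrightarrow> \<bar>mKdV_flux lam q x s\<bar> \<le> B / (1 + x)^2"
proof -
  obtain C where C_ge: "C \<ge> 0" and C: "\<And>ds x s. ds \<in> {[], [True], [True, True]} \<Longrightarrow>
      x \<ge> 0 \<Longrightarrow> s \<in> {0..T} \<Longrightarrow> \<bar>pder ds q x s\<bar> \<le> C / (1 + x)^2"
    using rapid_decay_bound[OF decay, of "{[], [True], [True, True]}"] by auto
  have bound: "\<bar>pder ds q x s\<bar> \<le> C / (1 + x)^2" "\<bar>pder ds q x s\<bar> \<le> C"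
    if "ds \<in> {[], [True], [True, True]}" "x \<ge> 0" "s \<in> {0..T}" for ds x s
  proof -
    show "\<bar>pder ds q x s\<bar> \<le> C / (1 + x)^2" by (rule C[OF that])
    also have "C / (1 + x)^2 \<le> C"
      using that C_ge divide_left_mono[of 1 "(1 + x)^2" C] by (simp add: one_le_power)
    finally show "\<bar>pder ds q x s\<bar> \<le> C" .
  qed
  have "\<bar>mKdV_flux lam q x s\<bar> \<le> (2 * (C * C) + C * C + 3 * (C^3 * C)) / (1 + x)^2"
    if "x \<ge> 0" "s \<in> {0..T}" for x s
  proof -
    note dec = bound(1)[OF _ that] and bdd = bound(2)[OF _ that]
    have "\<bar>q x s * pder [True, True] q x s\<bar> \<le> C * (C / (1 + x)^2)"
      unfolding abs_mult using dec[of "[True, True]"] bdd[of "[]"] C_ge by (intro mult_mono) auto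
    moreover have "\<bar>(pder [True] q x s)^2\<bar> \<le> C * (C / (1 + x)^2)"
      using mult_mono[OF bdd[of "[True]"] dec[of "[True]"] C_ge abs_ge_zero]
      by (simp add: power2_eq_square abs_mult)
    moreover have "\<bar>(q x s)^3\<bar> \<le> C^3"
      unfolding power_abs using bdd[of "[]"] by (intro power_mono) auto
    then have "\<bar>(q x s)^4\<bar> \<le> C^3 * (C / (1 + x)^2)"
      unfolding power_Suc2[of "q x s" 3, simplified] abs_mult using dec[of "[]"] C_ge
      by (intro mult_mono) auto
    moreover have "\<bar>mKdV_flux lam q x s\<bar> \<le> \<bar>2 * (q x s * pder [True, True] q x s)\<bar>
        + \<bar>(pder [True] q x s)^2\<bar> + \<bar>3 * lam * (q x s)^4\<bar>"
      unfolding mKdV_flux_def mult.assoc[of 2] by arith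
    moreover have "\<bar>3 * lam * (q x s)^4\<bar> = 3 * \<bar>(q x s)^4\<bar>"
      using lam by (auto simp: abs_mult)
    moreover have "\<bar>lam\<bar> = 1" using lam by auto
    ultimately show ?thesis by (simp add: add_divide_distrib abs_mult)
  qed
  then show thesis by (rule that)
qed

lemma continuous_on_mKdV_flux:
  assumes smooth: "smooth2 q"
  shows "continuous_on A (\<lambda>s. mKdV_flux lam q x s)"
proof -
  note cont = smooth2_continuous_on(3)[OF smooth]
  have "continuous_on A (\<lambda>s. q x s)" using cont[of A "[]"] by simp
  then show ?thesis unfolding mKdV_flux_def by (intro continuous_intros cont)
qed

lemma flux_integral_tendsto_0:
  assumes lam: "lam \<in> {1, -1}" and smooth: "smooth2 q" and decay: "rapid_decay q T"
    and t: "t \<in> {0..T}"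
  shows "((\<lambda>R. integral {0..t} (\<lambda>s. mKdV_flux lam q R s)) \<longlongrightarrow> 0) at_top"
proof -
  obtain B where B: "\<And>x s. x \<ge> 0 \<Longrightarrow> s \<in> {0..T} \<Longrightarrow> \<bar>mKdV_flux lam q x s\<bar> \<le> B / (1 + x)^2"
    using mKdV_flux_bound[OF lam decay] by blast
  have "norm (integral {0..t} (\<lambda>s. mKdV_flux lam q R s)) \<le> B / (1 + R)^2 * t" if "R \<ge> 0" for R
    using B[OF that] t integral_bound[of 0 t "\<lambda>s. mKdV_flux lam q R s" "B / (1 + R)^2"]
      continuous_on_mKdV_flux[OF smooth] by auto
  then have "\<forall>\<^sub>F R in at_top. norm (integral {0..t} (\<lambda>s. mKdV_flux lam q R s)) \<le> B / (1 + R)^2 * t"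
    by (intro eventually_at_top_linorderI[of 0]) auto
  moreover have "((\<lambda>R. B / (1 + R)^2 * t) \<longlongrightarrow> 0) at_top" by real_asymp
  ultimately show ?thesis by (rule Lim_null_comparison)
qed

lemma mass_conservation:
  assumes lam: "lam \<in> {1, -1}" and T: "0 < T" and smooth: "smooth2 q" and decay: "rapid_decay q T"
    and mKdV: "\<forall>x>0. \<forall>s\<in>{0<..<T}.
        pdt q x s + pdx (pdx (pdx q)) x s - 6 * lam * (q x s)\<^sup>2 * pdx q x s = 0"
    and t: "t \<in> {0..T}"
  shows "mass q t - mass q 0 = - I_Delta lam q t"
proof -
  have slice: "quad_decay (\<lambda>x. (q x s)^2)" "continuous_on {0..} (\<lambda>x. (q x s)^2)"
    if "s \<in> {0..T}" for s
    using quad_decay_power2[OF rapid_decay_quad_decay[OF decay that, of "[]"]]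
      smooth2_continuous_on(2)[OF smooth, of _ "[]"] by (auto intro!: continuous_intros)
  have T0: "0 \<in> {0..T}" using T by simp
  define h where "h x = (q x t)^2 - (q x 0)^2" for x
  obtain K where K: "\<And>x. x \<ge> 0 \<Longrightarrow> norm (h x) \<le> K / (1 + x)^2"
    using quad_decayE[OF quad_decay_diff[OF slice(1)[OF t] slice(1)[OF T0]]] unfolding h_def by blast
  have lim_h: "((\<lambda>R. integral {0..R} h) \<longlongrightarrow> integral {0..} h) at_top"
    using K slice(2)[OF t] slice(2)[OF T0] unfolding h_def
    by (intro integral_tendsto_integral_halfline) (auto intro!: continuous_intros)
  have "\<forall>\<^sub>F R in at_top. integral {0..t} (\<lambda>s. mKdV_flux lam q 0 s)
      - integral {0..t} (\<lambda>s. mKdV_flux lam q R s) = integral {0..R} h"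
    unfolding h_def using mass_balance_box[OF T smooth mKdV t]
      integral_diff[OF integrable_continuous_interval integrable_continuous_interval,
        OF continuous_on_mKdV_flux[OF smooth] continuous_on_mKdV_flux[OF smooth]]
    by (intro eventually_at_top_linorderI[of 0]) auto
  moreover have "((\<lambda>R. integral {0..t} (\<lambda>s. mKdV_flux lam q 0 s)
      - integral {0..t} (\<lambda>s. mKdV_flux lam q R s)) \<longlongrightarrow> integral {0..t} (\<lambda>s. mKdV_flux lam q 0 s) - 0) at_top"
    by (intro tendsto_intros flux_integral_tendsto_0[OF lam smooth decay t])
  ultimately have "((\<lambda>R. integral {0..R} h) \<longlongrightarrow> integral {0..t} (\<lambda>s. mKdV_flux lam q 0 s)) at_top"
    by (simp add: Lim_transform_eventually)
  with lim_h have "integral {0..} h = integral {0..t} (\<lambda>s. mKdV_flux lam q 0 s)"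
    using tendsto_unique[OF trivial_limit_at_top_linorder] by blast
  moreover have "integral {0..} h = mass q t - mass q 0"
    unfolding h_def mass_def
    using quad_decay_integrable_on_halfline[OF slice(2) slice(1), of _ 0] t T0 by (intro integral_diff) auto
  moreover have "integral {0..t} (\<lambda>s. mKdV_flux lam q 0 s) = - I_Delta lam q t"
    unfolding I_Delta_def mKdV_flux_def g0_def g1_def g2_def
    by (simp add: integral_neg[symmetric] algebra_simps)
  ultimately show ?thesis by simp
qed

section \<open>Large-\<open>k\<close> expansion of the Jost solution and of \<open>c(t, k)\<close>\<close>

text \<open>\<open>jost12_coeff\<^sub>j\<close> and \<open>jost22_coeff\<^sub>j\<close> are the coefficients of \<open>(1 / (2 i k))\<^sup>j\<close> in the expansions
  of \<open>\<mu>\<^sub>3\<^sub>1\<^sub>2(0, s, k)\<close> and \<open>\<mu>\<^sub>3\<^sub>2\<^sub>2(0, s, k)\<close>.\<close>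

definition jost22_coeff1 :: "real \<Rightarrow> (real \<Rightarrow> real \<Rightarrow> real) \<Rightarrow> real \<Rightarrow> real" where
  "jost22_coeff1 lam q s = - lam * mass q s"

definition jost22_coeff2 :: "real \<Rightarrow> (real \<Rightarrow> real \<Rightarrow> real) \<Rightarrow> real \<Rightarrow> real" where
  "jost22_coeff2 lam q s = (mass q s)^2 / 2 - lam * (g0 q s)^2 / 2"

definition jost12_coeff2 :: "real \<Rightarrow> (real \<Rightarrow> real \<Rightarrow> real) \<Rightarrow> real \<Rightarrow> real" where
  "jost12_coeff2 lam q s = g0 q s * jost22_coeff1 lam q s - g1 q s"

definition jost12_coeff3 :: "real \<Rightarrow> (real \<Rightarrow> real \<Rightarrow> real) \<Rightarrow> real \<Rightarrow> real" where
  "jost12_coeff3 lam q s = g0 q s * jost22_coeff2 lam q s - g1 q s * jost22_coeff1 lam q s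
     - lam * (g0 q s)^3 + g2 q s"

lemma jost_expansion:
  fixes m12 m22 :: "real \<Rightarrow> real \<Rightarrow> complex \<Rightarrow> complex"
  assumes lam_pm1: "lam \<in> {1, -1}" and smooth: "smooth2 q" and decay: "rapid_decay q T"
    and s: "s \<in> {0..T}"
    and bdd: "\<forall>k. Im k \<ge> 0 \<longrightarrow> bounded ((\<lambda>x. m12 x s k) ` {0..}) \<and> bounded ((\<lambda>x. m22 x s k) ` {0..})"
    and eq12: "\<forall>k. Im k \<ge> 0 \<longrightarrow> (\<forall>x\<ge>0.
        ((\<lambda>\<xi>. exp (2 * \<i> * k * of_real (\<xi> - x)) * of_real (q \<xi> s) * m22 \<xi> s k)
          has_integral (- m12 x s k)) {x..})"
    and eq22: "\<forall>k. Im k \<ge> 0 \<longrightarrow> (\<forall>x\<ge>0.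
        ((\<lambda>\<xi>. of_real lam * of_real (q \<xi> s) * m12 \<xi> s k) has_integral (1 - m22 x s k)) {x..})"
  shows "\<exists>K\<ge>0. \<forall>\<^sub>F k in inf at_infinity (principal {k. Im k \<ge> 0}).
      norm (m12 0 s k - (of_real (g0 q s) * inv_2ik k + of_real (jost12_coeff2 lam q s) * inv_2ik k ^ 2
        + of_real (jost12_coeff3 lam q s) * inv_2ik k ^ 3)) \<le> K * norm (inv_2ik k) ^ 4
      \<and> norm (m22 0 s k - (1 + of_real (jost22_coeff1 lam q s) * inv_2ik k
        + of_real (jost22_coeff2 lam q s) * inv_2ik k ^ 2)) \<le> K * norm (inv_2ik k) ^ 3"
proof -
  interpret decaying_potential lam "\<lambda>x. q x s" "\<lambda>x. pder [True] q x s" "\<lambda>x. pder [True, True] q x s"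
      "\<lambda>x. pder [True, True, True] q x s" "\<lambda>x. pder [True, True, True, True] q x s"
    by (rule decaying_potential_slice[OF lam_pm1 smooth decay s])
  have lam2: "lam * lam = 1" using lam_pm1 by auto
  have coefficients: "v1 0 = jost22_coeff1 lam q s" "v2 0 = jost22_coeff2 lam q s"
    "u2 0 = jost12_coeff2 lam q s" "u3 0 = jost12_coeff3 lam q s"
    unfolding v1_def v2_def u2_def u3_def u2'_def jost22_coeff1_def jost22_coeff2_def jost12_coeff2_def
      jost12_coeff3_def mass_def g0_def g1_def g2_def
    using lam2 by (simp_all add: algebra_simps power2_eq_square)
  show ?thesis
  proof (rule expansion_at_origin, goal_cases)
    case (1 K)
    have "norm (m12 0 s k - (of_real (g0 q s) * inv_2ik k + of_real (jost12_coeff2 lam q s) * inv_2ik k ^ 2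
          + of_real (jost12_coeff3 lam q s) * inv_2ik k ^ 3)) \<le> K * norm (inv_2ik k) ^ 4
        \<and> norm (m22 0 s k - (1 + of_real (jost22_coeff1 lam q s) * inv_2ik k
          + of_real (jost22_coeff2 lam q s) * inv_2ik k ^ 2)) \<le> K * norm (inv_2ik k) ^ 3"
      if k: "Im k \<ge> 0" "norm k \<ge> 1" for k
    proof -
      obtain M where M: "\<And>x. x \<ge> 0 \<Longrightarrow> norm (m12 x s k) \<le> M \<and> norm (m22 x s k) \<le> M"
        using bdd[rule_format, OF k(1)] unfolding bounded_iff by (metis atLeast_iff image_eqI max.cobounded1
            max.cobounded2 order_trans)
      have "k \<noteq> 0" "norm (inv_2ik k) \<le> 1" using k by (auto simp: norm_inv_2ik divide_le_eq)
      from 1(2)[OF this(1) k(1) this(2) M eq12[rule_format, OF k(1)] eq22[rule_format, OF k(1)]]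
      show ?thesis unfolding coefficients g0_def by simp
    qed
    with 1(1) show ?case
      unfolding eventually_inf_principal eventually_at_infinity by auto
  qed
qed

lemma ex_eventually_conjunctD:
  assumes "\<exists>K\<ge>(0::real). \<forall>\<^sub>F x in F. P K x \<and> Q K x"
  shows "\<exists>K\<ge>0. \<forall>\<^sub>F x in F. P K x" and "\<exists>K\<ge>0. \<forall>\<^sub>F x in F. Q K x"
  using assms by (auto elim: eventually_mono)

lemma norm_cubic_le:
  fixes c1 c2 c3 w :: "'a::real_normed_field"
  assumes "norm w \<le> 1"
  shows "norm (c1 * w + c2 * w^2 + c3 * w^3) \<le> (norm c1 + norm c2 + norm c3) * norm w"
proof -
  have "norm w ^ 2 \<le> norm w" "norm w ^ 3 \<le> norm w"
    using assms by (simp_all add: power_le_one_iff power_decreasing[of 1 _ "norm w", simplified])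
  then have "norm c1 * norm w + norm c2 * norm w ^ 2 + norm c3 * norm w ^ 3
      \<le> (norm c1 + norm c2 + norm c3) * norm w"
    by (simp add: distrib_right add_mono mult_left_mono)
  moreover have "norm (c1 * w + c2 * w^2 + c3 * w^3) \<le> norm (c1 * w) + norm (c2 * w^2) + norm (c3 * w^3)"
    by (rule order_trans[OF norm_triangle_ineq add_right_mono[OF norm_triangle_ineq]])
  then have "norm (c1 * w + c2 * w^2 + c3 * w^3)
      \<le> norm c1 * norm w + norm c2 * norm w ^ 2 + norm c3 * norm w ^ 3"
    by (simp add: norm_mult norm_power)
  ultimately show ?thesis by linarith
qed

lemma norm_near_one_ge_half:
  fixes V b1 b2 w :: "'a::real_normed_field"
  assumes V: "norm (V - (1 + b1 * w + b2 * w^2)) \<le> B * norm w ^ 3"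
    and w: "norm w \<le> 1" and small: "(norm b1 + norm b2 + B) * norm w \<le> 1 / 2" and B: "B \<ge> 0"
  shows "norm V \<ge> 1 / 2"
proof -
  have "norm (V - 1) \<le> norm (b1 * w + b2 * w^2) + B * norm w ^ 3"
    using norm_triangle_ineq[of "b1 * w + b2 * w^2" "V - (1 + b1 * w + b2 * w^2)"] V
    by (simp add: algebra_simps)
  also have "norm (b1 * w + b2 * w^2) + B * norm w ^ 3 \<le> (norm b1 + norm b2 + B) * norm w"
    using norm_cubic_le[OF w, of b1 b2 0] mult_left_mono[OF power_decreasing[of 1 3 "norm w"] B] w
    by (simp add: distrib_right)
  finally have "norm (V - 1) \<le> 1 / 2" using small by linarith
  then show ?thesis using norm_triangle_ineq2[of 1 V] by (simp add: norm_minus_commute)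
qed

lemma quotient_expansion_bound:
  fixes U V w c1 c2 c3 b1 b2 :: "'a::real_normed_field"
  assumes U: "norm (U - (c1 * w + (c2 + c1 * b1) * w^2 + (c3 + c2 * b1 + c1 * b2) * w^3))
      \<le> A * norm w ^ 4"
    and V: "norm (V - (1 + b1 * w + b2 * w^2)) \<le> B * norm w ^ 3"
    and w: "norm w \<le> 1" and small: "(norm b1 + norm b2 + B) * norm w \<le> 1 / 2"
    and A: "A \<ge> 0" and B: "B \<ge> 0"
  shows "norm (U / V - (c1 * w + c2 * w^2 + c3 * w^3))
     \<le> 2 * (A + (norm c1 + norm c2 + norm c3) * B + norm (c2 * b2 + c3 * b1) + norm (c3 * b2)) * norm w ^ 4"
proof -
  define T where "T = c1 * w + c2 * w^2 + c3 * w^3"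
  define eU where "eU = U - (c1 * w + (c2 + c1 * b1) * w^2 + (c3 + c2 * b1 + c1 * b2) * w^3)"
  define eV where "eV = V - (1 + b1 * w + b2 * w^2)"
  define X where "X = c2 * b2 + c3 * b1"
  define Y where "Y = c3 * b2"
  define C where "C = A + (norm c1 + norm c2 + norm c3) * B + norm X + norm Y"
  have eq: "U - T * V = eU - T * eV - X * w^4 - Y * w^5"
    unfolding eU_def eV_def T_def X_def Y_def by (simp add: algebra_simps eval_nat_numeral)
  have "norm (U - T * V) \<le> norm eU + norm (T * eV) + norm (X * w^4) + norm (Y * w^5)"
    using norm_triangle_ineq4[of "eU - T * eV - X * w^4" "Y * w^5"]
      norm_triangle_ineq4[of "eU - T * eV" "X * w^4"] norm_triangle_ineq4[of eU "T * eV"]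
    unfolding eq by linarith
  also have "\<dots> \<le> A * norm w ^ 4 + ((norm c1 + norm c2 + norm c3) * norm w) * (B * norm w ^ 3)
      + norm X * norm w ^ 4 + norm Y * norm w ^ 4"
    unfolding norm_mult norm_power using U V norm_cubic_le[OF w] B w unfolding eU_def eV_def T_def
    by (intro add_mono mult_mono mult_left_mono power_decreasing) auto
  also have "\<dots> = C * norm w ^ 4"
    unfolding C_def by (simp add: algebra_simps eval_nat_numeral)
  finally have num: "norm (U - T * V) \<le> C * norm w ^ 4" .
  have den: "norm V \<ge> 1 / 2" by (rule norm_near_one_ge_half[OF V w small B])
  then have "V \<noteq> 0" by auto
  then have "norm (U / V - T) = norm (U - T * V) / norm V"
    by (simp add: diff_divide_distrib norm_divide[symmetric])
  also have "\<dots> \<le> norm (U - T * V) / (1 / 2)"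
    using den by (intro divide_left_mono) auto
  also have "\<dots> \<le> 2 * C * norm w ^ 4" using num by simp
  finally show ?thesis unfolding T_def C_def X_def Y_def .
qed

lemma quotient_expansion_bigo:
  fixes U V w :: "'a \<Rightarrow> 'b::real_normed_field"
  assumes U: "\<exists>A\<ge>0. \<forall>\<^sub>F k in F. norm (U k - (c1 * w k + (c2 + c1 * b1) * w k ^ 2
      + (c3 + c2 * b1 + c1 * b2) * w k ^ 3)) \<le> A * norm (w k) ^ 4"
    and V: "\<exists>B\<ge>0. \<forall>\<^sub>F k in F. norm (V k - (1 + b1 * w k + b2 * w k ^ 2)) \<le> B * norm (w k) ^ 3"
    and w: "(w \<longlongrightarrow> 0) F"
  shows "(\<lambda>k. U k / V k - (c1 * w k + c2 * w k ^ 2 + c3 * w k ^ 3)) \<in> O[F](\<lambda>k. w k ^ 4)"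
proof -
  obtain A B where A: "A \<ge> 0" and B: "B \<ge> 0"
    and U: "\<forall>\<^sub>F k in F. norm (U k - (c1 * w k + (c2 + c1 * b1) * w k ^ 2
      + (c3 + c2 * b1 + c1 * b2) * w k ^ 3)) \<le> A * norm (w k) ^ 4"
    and V: "\<forall>\<^sub>F k in F. norm (V k - (1 + b1 * w k + b2 * w k ^ 2)) \<le> B * norm (w k) ^ 3"
    using U V by blast
  define n where "n = norm b1 + norm b2 + B"
  define r where "r = 1 / (2 * (n + 1))"
  have n: "n \<ge> 0" unfolding n_def using B by simp
  then have r: "r > 0" "r \<le> 1" "n * r \<le> 1 / 2" unfolding r_def by (simp_all add: field_simps)
  then have "\<forall>\<^sub>F k in F. norm (w k) < r"
    using w unfolding tendsto_iff by simp
  then have "\<forall>\<^sub>F k in F. norm (w k) \<le> r"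
    by (rule eventually_mono) simp
  then have "\<forall>\<^sub>F k in F. norm (U k / V k - (c1 * w k + c2 * w k ^ 2 + c3 * w k ^ 3))
      \<le> 2 * (A + (norm c1 + norm c2 + norm c3) * B + norm (c2 * b2 + c3 * b1) + norm (c3 * b2))
        * norm (w k ^ 4)"
    using U V
  proof eventually_elim
    case (elim k)
    have "(norm b1 + norm b2 + B) * norm (w k) \<le> 1 / 2"
      using mult_left_mono[OF elim(1) n] r unfolding n_def by linarith
    moreover have "norm (w k) \<le> 1" using elim(1) r by simp
    ultimately show ?case
      using quotient_expansion_bound[OF elim(2,3) _ _ A B] by (simp add: norm_power)
  qed
  then show ?thesis by (rule bigoI)
qed

lemma Phi1_1_eq: "Phi1_1 q t * (2 * \<i>) = of_real (g0 q t)"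
  unfolding Phi1_1_def by (simp add: complex_eq_iff)

lemma Phi1_2_eq:
  "Phi1_2 lam q t * (2 * \<i>) ^ 2 = of_real (- g1 q t + lam * g0 q t * I_Delta lam q t)"
  unfolding Phi1_2_def by (simp add: complex_eq_iff power2_eq_square algebra_simps)

lemma Phi1_3_eq:
  "Phi1_3 lam q t * (2 * \<i>) ^ 3 = of_real
     (- lam * g0 q t ^ 3 / 2 + lam * g0 q t * g0 q 0 ^ 2 / 2 + g0 q t * I_Delta lam q t ^ 2 / 2
      - lam * g1 q t * I_Delta lam q t - lam * g0 q t ^ 3 + g2 q t)"
proof -
  have "z / (2 * \<i>) = - \<i> * z / 2" for z :: complex by (simp add: field_simps)
  then show ?thesis
    unfolding Phi1_3_def Phi2_2_def Phi2_1_def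
    by (simp add: complex_eq_iff power3_eq_cube power2_eq_square algebra_simps) (simp add: field_simps)
qed

text \<open>With the conservation law, the expansion coefficients of \<open>F\<^sub>1\<^sub>2(t, k)\<close> and \<open>a(k)\<close> combine to
  those of \<open>\<Phi>\<^sub>1\<close>: \<open>F\<^sub>1\<^sub>2 = (\<Phi>\<^sub>1\<^sup>(\<^sup>1\<^sup>)/k + \<Phi>\<^sub>1\<^sup>(\<^sup>2\<^sup>)/k\<^sup>2 + \<Phi>\<^sub>1\<^sup>(\<^sup>3\<^sup>)/k\<^sup>3) a + O(k\<^sup>-\<^sup>4)\<close>.\<close>

lemma Phi1_coefficients:
  assumes lam: "lam \<in> {1, -1}" and cons: "mass q t - mass q 0 = - I_Delta lam q t"
  defines "c1 \<equiv> Phi1_1 q t * (2 * \<i>)" and "c2 \<equiv> Phi1_2 lam q t * (2 * \<i>) ^ 2"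
    and "c3 \<equiv> Phi1_3 lam q t * (2 * \<i>) ^ 3"
    and "b1 \<equiv> of_real (jost22_coeff1 lam q 0)" and "b2 \<equiv> of_real (jost22_coeff2 lam q 0)"
  shows "of_real (g0 q t) = c1"
    and "of_real (jost12_coeff2 lam q t) = c2 + c1 * b1"
    and "of_real (jost12_coeff3 lam q t) = c3 + c2 * b1 + c1 * b2"
proof -
  have mass_t: "mass q t = mass q 0 - I_Delta lam q t" using cons by simp
  show "of_real (g0 q t) = c1" unfolding c1_def Phi1_1_eq ..
  show "of_real (jost12_coeff2 lam q t) = c2 + c1 * b1"
    unfolding c1_def c2_def b1_def Phi1_1_eq Phi1_2_eq
    by (simp add: jost12_coeff2_def jost22_coeff1_def mass_t algebra_simps)
  have "lam = 1 \<or> lam = -1" using lam by auto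
  then have "jost12_coeff3 lam q t = (- lam * g0 q t ^ 3 / 2 + lam * g0 q t * g0 q 0 ^ 2 / 2
      + g0 q t * I_Delta lam q t ^ 2 / 2 - lam * g1 q t * I_Delta lam q t - lam * g0 q t ^ 3 + g2 q t)
      + (- g1 q t + lam * g0 q t * I_Delta lam q t) * jost22_coeff1 lam q 0
      + g0 q t * jost22_coeff2 lam q 0"
    unfolding jost12_coeff3_def jost22_coeff1_def jost22_coeff2_def mass_t
    by (elim disjE) (simp_all add: algebra_simps power2_eq_square power3_eq_cube field_simps)
  then show "of_real (jost12_coeff3 lam q t) = c3 + c2 * b1 + c1 * b2"
    unfolding c1_def c2_def c3_def b1_def b2_def Phi1_1_eq Phi1_2_eq Phi1_3_eq by simp
qed

theorem lemma4p1:
  fixes lam T t :: real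
    and q :: "real \<Rightarrow> real \<Rightarrow> real"
    and Phi1 Phi2 :: "real \<Rightarrow> complex \<Rightarrow> complex"
    and m12 m22 :: "real \<Rightarrow> real \<Rightarrow> complex \<Rightarrow> complex"
  assumes lam: "lam \<in> {1, -1}"
    and T: "0 < T"
    and smooth: "smooth2 q"
    and decay: "rapid_decay q T"
    and mKdV: "\<forall>x>0. \<forall>s\<in>{0<..<T}.
        pdt q x s + pdx (pdx (pdx q)) x s - 6 * lam * (q x s)\<^sup>2 * pdx q x s = 0"
    and Phi_cont: "\<forall>k. continuous_on {0..<T} (\<lambda>s. Phi1 s k) \<and> continuous_on {0..<T} (\<lambda>s. Phi2 s k)"
    and Phi1_eq: "\<forall>k. \<forall>s\<in>{0<..<T}.
        ((\<lambda>s'. exp (8 * \<i> * k ^ 3 * complex_of_real (s' - s)) *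
            (- 2 * \<i> * k * complex_of_real lam * complex_of_real ((g0 q s')\<^sup>2) * Phi1 s' k
             + (complex_of_real (2 * lam * (g0 q s') ^ 3) + 4 * k\<^sup>2 * complex_of_real (g0 q s')
                + 2 * \<i> * k * complex_of_real (g1 q s') - complex_of_real (g2 q s')) * Phi2 s' k))
          has_integral Phi1 s k) {0..s}"
    and Phi2_eq: "\<forall>k. \<forall>s\<in>{0<..<T}.
        ((\<lambda>s'. complex_of_real lam *
            ((complex_of_real (2 * lam * (g0 q s') ^ 3) + 4 * k\<^sup>2 * complex_of_real (g0 q s')
                - 2 * \<i> * k * complex_of_real (g1 q s') - complex_of_real (g2 q s')) * Phi1 s' k
             + 2 * \<i> * k * complex_of_real ((g0 q s')\<^sup>2) * Phi2 s' k))
          has_integral (Phi2 s k - 1)) {0..s}"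
    and mu_bdd: "\<forall>s\<in>{0..<T}. \<forall>k. Im k \<ge> 0 \<longrightarrow>
        bounded ((\<lambda>x. m12 x s k) ` {0..}) \<and> bounded ((\<lambda>x. m22 x s k) ` {0..})"
    and mu12_eq: "\<forall>s\<in>{0..<T}. \<forall>k. Im k \<ge> 0 \<longrightarrow> (\<forall>x\<ge>0.
        ((\<lambda>\<xi>. exp (2 * \<i> * k * complex_of_real (\<xi> - x)) * complex_of_real (q \<xi> s) * m22 \<xi> s k)
          has_integral (- m12 x s k)) {x..})"
    and mu22_eq: "\<forall>s\<in>{0..<T}. \<forall>k. Im k \<ge> 0 \<longrightarrow> (\<forall>x\<ge>0.
        ((\<lambda>\<xi>. complex_of_real lam * complex_of_real (q \<xi> s) * m12 \<xi> s k)
          has_integral (1 - m22 x s k)) {x..})"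
    and t: "t \<in> {0<..<T}"
  shows "(\<lambda>k. m12 0 t k / m22 0 0 k
            - (Phi1_1 q t / k + Phi1_2 lam q t / k\<^sup>2 + Phi1_3 lam q t / k ^ 3))
         \<in> O[inf at_infinity (principal D1)](\<lambda>k. 1 / k ^ 4)"
proof -
  have s: "t \<in> {0..T}" "0 \<in> {0..T}" and s': "t \<in> {0..<T}" "0 \<in> {0..<T}" using t T by auto
  have cons: "mass q t - mass q 0 = - I_Delta lam q t"
    using mass_conservation[OF lam T smooth decay mKdV s(1)] .
  note coefficients = Phi1_coefficients[OF lam cons]
  have powers: "Phi1_1 q t * (2 * \<i>) * inv_2ik k + Phi1_2 lam q t * (2 * \<i>) ^ 2 * inv_2ik k ^ 2
      + Phi1_3 lam q t * (2 * \<i>) ^ 3 * inv_2ik k ^ 3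
      = Phi1_1 q t / k + Phi1_2 lam q t / k\<^sup>2 + Phi1_3 lam q t / k ^ 3"
    and fourth_power: "inv_2ik k ^ 4 = 1 / k ^ 4 * (1 / (2 * \<i>)) ^ 4" for k
    unfolding inv_2ik_def by (simp_all add: field_simps power2_eq_square power3_eq_cube)
  have "(\<lambda>k. m12 0 t k / m22 0 0 k - (Phi1_1 q t * (2 * \<i>) * inv_2ik k + Phi1_2 lam q t * (2 * \<i>) ^ 2
      * inv_2ik k ^ 2 + Phi1_3 lam q t * (2 * \<i>) ^ 3 * inv_2ik k ^ 3))
      \<in> O[inf at_infinity (principal {k. Im k \<ge> 0})](\<lambda>k. inv_2ik k ^ 4)"
    by (rule quotient_expansion_bigo[OF
          ex_eventually_conjunctD(1)[OF jost_expansion[where ?m12.0=m12 and ?m22.0=m22,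
            OF lam smooth decay s(1) mu_bdd[THEN bspec, OF s'(1)] mu12_eq[THEN bspec, OF s'(1)]
            mu22_eq[THEN bspec, OF s'(1)]], unfolded coefficients]
          ex_eventually_conjunctD(2)[OF jost_expansion[where ?m12.0=m12 and ?m22.0=m22,
            OF lam smooth decay s(2) mu_bdd[THEN bspec, OF s'(2)] mu12_eq[THEN bspec, OF s'(2)]
            mu22_eq[THEN bspec, OF s'(2)]]]
          inv_2ik_tendsto_0[OF inf_le1]])
  then have "(\<lambda>k. m12 0 t k / m22 0 0 k - (Phi1_1 q t / k + Phi1_2 lam q t / k\<^sup>2 + Phi1_3 lam q t / k ^ 3))
      \<in> O[inf at_infinity (principal {k. Im k \<ge> 0})](\<lambda>k. 1 / k ^ 4)"
    unfolding powers fourth_power by (subst (asm) landau_o.big.cmult') simp_all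
  moreover have "inf at_infinity (principal D1) \<le> inf at_infinity (principal {k. Im k \<ge> 0})"
    unfolding D1_def by (intro inf_mono) auto
  ultimately show ?thesis by (rule landau_o.big.filter_mono[rotated])
qed

end
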